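(* Let $n\ge 5$ and let $\{C_i,C_j,C_k\}$ be a critical triplet in $\mathcal C_{[n]}$. Then $C_j$ and $C_k$ are not adjacent in $G_{NNI}(n)$; equivalently, $C_j$ and $C_k$ do not cover a common element of $S([n])$.
   Context: An $X$-tree is a pair $(T,\phi)$ with $T$ a finite tree and $\phi:X\to V(T)$ a map such that every vertex not in $\phi(X)$ has degree at least $3$; a vertex is labeled if it lies in $\phi(X)$. An $X$-forest is a set $\{(A,\mathcal T_A):A\in\pi\}$ where $\pi$ is a set partition of $X$ and each $\mathcal T_A$ is an $A$-tree. Contracting an edge $e=(u,v)$ removes $e$ and identifies $u,v$, the new vertex carrying the union of the labels. Deleting $e$ removes it without changing vertices; it is safe if each of $u,v$ is labeled or has degree greater than $3$. The Tuffley poset $S(X)$ is the set of $X$-forests with $\mathcal F'\le\mathcal F$ iff $\mathcal F'$ is obtained from $\mathcal F$ by a sequence of contractions and safe deletions; covers are single contractions or safe deletions. $\mathcal C_{X}$ is the set of maximal elements of $S(X)$: trees with leaves labeled bijectively by $X$ and internal vertices unlabeled of degree $3$. Here $X=[n]=\{1,\dots,n\}$. NNI: for $C\in\mathcal C_X$ and an internal edge $\alpha=(u,v)$ separating subtrees $A,B$ at $u$ from $C',D$ at $v$, swapping $B$ with $C'$ or $B$ with $D$ is a nearest neighbor interchange over $\alpha$. $G_{NNI}(n)$ is the graph on vertex set $\mathcal C_{[n]}$ with an edge between two trees iff they are related by one NNI. A critical triplet is a triple $\{C_i,C_j,C_k\}$ of elements of $\mathcal C_{[n]}$ such that: (1)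 $C_i$ has a leaf labeled $x$ whose leaf edge $e_x$ is adjacent to two internal edges $e_{x_1}$ and $e_{x_2}$; (2) $C_j\neq C_i$ and both $C_i$ and $C_j$ cover $F_j$, the element obtained from $C_i$ by contracting $e_{x_1}$; (3) $C_k\neq C_i$ and both $C_i$ and $C_k$ cover $F_k$, the element obtained from $C_i$ by contracting $e_{x_2}$. *)

theory Defs
  imports Main
begin

text \<open>X-forests are represented concretely as finite graphs on natural-number
vertices together with a labelling map; a vertex is labeled if it lies in lab ` X.
Elements of S(X) are isomorphism classes; every notion below is taken up to
label-preserving isomorphism.\<close>

record xforest =
  verts :: "nat set"
  edges :: "nat set set"
  lab   :: "nat \<Rightarrow> nat"

definition adj :: "nat set set \<Rightarrow> nat \<Rightarrow> nat \<Rightarrow> bool" where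
  "adj E u v \<longleftrightarrow> {u, v} \<in> E"

definition conn :: "nat set set \<Rightarrow> nat \<Rightarrow> nat \<Rightarrow> bool" where
  "conn E = (adj E)\<^sup>*\<^sup>*"

definition deg :: "nat set set \<Rightarrow> nat \<Rightarrow> nat" where
  "deg E v = card {e \<in> E. v \<in> e}"

definition labeled :: "nat set \<Rightarrow> xforest \<Rightarrow> nat \<Rightarrow> bool" where
  "labeled X F v \<longleftrightarrow> v \<in> lab F ` X"

text \<open>A finite simple graph without cycles (a forest) in which every unlabeled vertex
has degree at least 3 and every connected component contains a label; its components
(with label sets the blocks of the partition pi) are exactly the A-trees of an X-forest.\<close>
definition is_xforest :: "nat set \<Rightarrow> xforest \<Rightarrow> bool" where
  "is_xforest X F \<longleftrightarrow>
     finite (verts F) \<and>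
     (\<forall>e \<in> edges F. \<exists>u v. e = {u, v} \<and> u \<noteq> v \<and> u \<in> verts F \<and> v \<in> verts F) \<and>
     lab F ` X \<subseteq> verts F \<and>
     (\<forall>e \<in> edges F. \<forall>u v. e = {u, v} \<longrightarrow> \<not> conn (edges F - {e}) u v) \<and>
     (\<forall>v \<in> verts F. \<exists>x \<in> X. conn (edges F) v (lab F x)) \<and>
     (\<forall>v \<in> verts F. \<not> labeled X F v \<longrightarrow> deg (edges F) v \<ge> 3)"

definition is_xtree :: "nat set \<Rightarrow> xforest \<Rightarrow> bool" where
  "is_xtree X F \<longleftrightarrow> is_xforest X F \<and> verts F \<noteq> {} \<and>
     (\<forall>u \<in> verts F. \<forall>v \<in> verts F. conn (edges F) u v)"

definition iso :: "nat set \<Rightarrow> xforest \<Rightarrow> xforest \<Rightarrow> bool" where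
  "iso X F G \<longleftrightarrow> (\<exists>f. bij_betw f (verts F) (verts G) \<and>
      edges G = (\<lambda>e. f ` e) ` edges F \<and> (\<forall>x \<in> X. lab G x = f (lab F x)))"

definition contract :: "xforest \<Rightarrow> nat \<Rightarrow> nat \<Rightarrow> xforest" where
  "contract F u v =
     (let g = (\<lambda>w. if w = v then u else w) in
      \<lparr> verts = verts F - {v},
        edges = (\<lambda>e. g ` e) ` (edges F - {{u, v}}),
        lab = g \<circ> lab F \<rparr>)"

definition delete :: "xforest \<Rightarrow> nat \<Rightarrow> nat \<Rightarrow> xforest" where
  "delete F u v = F\<lparr> edges := edges F - {{u, v}} \<rparr>"

definition safe_del :: "nat set \<Rightarrow> xforest \<Rightarrow> nat \<Rightarrow> nat \<Rightarrow> bool" where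
  "safe_del X F u v \<longleftrightarrow>
     (labeled X F u \<or> deg (edges F) u > 3) \<and> (labeled X F v \<or> deg (edges F) v > 3)"

definition covers :: "nat set \<Rightarrow> xforest \<Rightarrow> xforest \<Rightarrow> bool" where
  "covers X F G \<longleftrightarrow> is_xforest X F \<and> is_xforest X G \<and>
     (\<exists>u v. {u, v} \<in> edges F \<and> u \<noteq> v \<and>
        (iso X G (contract F u v) \<or> (safe_del X F u v \<and> iso X G (delete F u v))))"

text \<open>Elements of C_X: X-trees whose leaves are labeled bijectively by X and whose
internal vertices are unlabeled of degree 3.\<close>
definition binary_xtree :: "nat set \<Rightarrow> xforest \<Rightarrow> bool" where
  "binary_xtree X C \<longleftrightarrow> is_xtree X C \<and> inj_on (lab C) X \<and>
     (\<forall>v \<in> verts C. (labeled X C v \<and> deg (edges C) v = 1) \<or>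
                      (\<not> labeled X C v \<and> deg (edges C) v = 3))"

definition nni_move :: "xforest \<Rightarrow> nat \<Rightarrow> nat \<Rightarrow> nat \<Rightarrow> nat \<Rightarrow> xforest" where
  "nni_move C u v b c = C\<lparr> edges := (edges C - {{u, b}, {v, c}}) \<union> {{u, c}, {v, b}} \<rparr>"

definition nni_adjacent :: "nat set \<Rightarrow> xforest \<Rightarrow> xforest \<Rightarrow> bool" where
  "nni_adjacent X C C' \<longleftrightarrow> binary_xtree X C \<and> binary_xtree X C' \<and>
     (\<exists>u v b c. {u, v} \<in> edges C \<and> u \<noteq> v \<and>
        \<not> labeled X C u \<and> \<not> labeled X C v \<and>
        {u, b} \<in> edges C \<and> b \<noteq> u \<and> b \<noteq> v \<and>
        {v, c} \<in> edges C \<and> c \<noteq> v \<and> c \<noteq> u \<and>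
        iso X C' (nni_move C u v b c))"

text \<open>Critical triplet: the leaf x (vertex lab Ci x) is attached to w, and the two other
edges at w, namely {w,a} (= e_x1) and {w,b} (= e_x2), are internal edges.\<close>
definition critical_triplet :: "nat set \<Rightarrow> xforest \<Rightarrow> xforest \<Rightarrow> xforest \<Rightarrow> bool" where
  "critical_triplet X Ci Cj Ck \<longleftrightarrow>
     binary_xtree X Ci \<and> binary_xtree X Cj \<and> binary_xtree X Ck \<and>
     (\<exists>x \<in> X. \<exists>w a b.
        {lab Ci x, w} \<in> edges Ci \<and> w \<noteq> lab Ci x \<and>
        {w, a} \<in> edges Ci \<and> {w, b} \<in> edges Ci \<and>
        a \<noteq> b \<and> a \<noteq> w \<and> b \<noteq> w \<and> a \<noteq> lab Ci x \<and> b \<noteq> lab Ci x \<and>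
        \<not> labeled X Ci w \<and> \<not> labeled X Ci a \<and> \<not> labeled X Ci b \<and>
        \<not> iso X Cj Ci \<and> covers X Ci (contract Ci w a) \<and> covers X Cj (contract Ci w a) \<and>
        \<not> iso X Ck Ci \<and> covers X Ci (contract Ci w b) \<and> covers X Ck (contract Ci w b))"

end

theory Submission
  imports Defs
begin

text \<open>An edge e of a tree displays the quartet pq|rs if deleting e separates p, q from r, s.
No tree displays both pq|rs and pr|qs, and contracting an edge keeps exactly the quartets
displayed by the other edges. In C_i let w carry the leaf x, with inner neighbours a and b,
and let a1, a2 resp. b1, b2 be leaves behind the other neighbours of a resp. b. A binary tree
C_j covering the contraction of wa other than C_i must put x into a cherry with one of a1, a2,
say ai: one edge displays x ai|ao b for both b in {b1, b2}, and further edges display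
x a'|b1 b2. Symmetrically C_k puts x next to some bi. If C_j and C_k were NNI neighbours or
covered a common element, the quartets of some contraction of C_j would all be displayed
by C_k, and this brings two incompatible quartets together in C_k.\<close>

section \<open>Connectivity in edge sets\<close>

lemma adj_commute: "adj E u v = adj E v u"
  by (simp add: adj_def insert_commute)

lemma conn_refl[simp]: "conn E x x" by (simp add: conn_def)

lemma conn_sym: "conn E x y \<Longrightarrow> conn E y x"
  unfolding conn_def
proof (induction rule: rtranclp_induct)
  case base then show ?case by simp
next
  case (step y z)
  then show ?case using adj_commute by (metis converse_rtranclp_into_rtranclp)
qed

lemma conn_trans: "conn E x y \<Longrightarrow> conn E y z \<Longrightarrow> conn E x z"
  unfolding conn_def by (rule rtranclp_trans)

lemma conn_edge: "{x,y} \<in> E \<Longrightarrow> conn E x y"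
  unfolding conn_def adj_def by (simp add: r_into_rtranclp)

lemma conn_mono: "conn E x y \<Longrightarrow> E \<subseteq> E' \<Longrightarrow> conn E' x y"
  unfolding conn_def
proof (induction rule: rtranclp_induct)
  case base then show ?case by simp
next
  case (step y z)
  then show ?case by (metis adj_def rtranclp.rtrancl_into_rtrancl subsetD)
qed

lemma conn_map:
  assumes "conn G p q" and "\<And>y z. adj G y z \<Longrightarrow> adj G' (h y) (h z) \<or> h y = h z"
  shows "conn G' (h p) (h q)"
  using assms(1) unfolding conn_def
proof (induction rule: rtranclp_induct)
  case base then show ?case by simp
next
  case (step y z)
  then show ?case using assms(2) by (metis rtranclp.rtrancl_into_rtrancl)
qed

lemma conn_avoiding:
  assumes "conn G p z" "\<not> conn G p c"
  shows "conn {e\<in>G. c \<notin> e} p z"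
  using assms unfolding conn_def
proof (induction rule: rtranclp_induct)
  case base then show ?case by simp
next
  case (step y z)
  have "y \<noteq> c" using step by auto
  moreover have "z \<noteq> c" using step by (metis rtranclp.rtrancl_into_rtrancl)
  ultimately have "adj {e\<in>G. c \<notin> e} y z" using step(2) by (auto simp: adj_def)
  then show ?case using step by (metis rtranclp.rtrancl_into_rtrancl)
qed

lemma conn_insert_edgeD:
  assumes "conn (insert {\<alpha>,\<beta>} H) x y"
  shows "conn H x y \<or> (conn H x \<alpha> \<and> conn H \<beta> y) \<or> (conn H x \<beta> \<and> conn H \<alpha> y)"
  using assms unfolding conn_def[of "insert {\<alpha>,\<beta>} H"]
proof (induction rule: rtranclp_induct)
  case base then show ?case by simp
next
  case (step y z)
  have ad: "adj H y z \<or> {y,z} = {\<alpha>,\<beta>}" using step(2) by (auto simp: adj_def)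
  show ?case
  proof (cases "adj H y z")
    case True
    then have c: "conn H y z" by (simp add: conn_def r_into_rtranclp)
    show ?thesis using step(3) conn_trans[OF _ c] by blast
  next
    case False
    then have yz: "(y = \<alpha> \<and> z = \<beta>) \<or> (y = \<beta> \<and> z = \<alpha>)"
      using ad by (auto simp: doubleton_eq_iff)
    then show ?thesis
    proof
      assume a: "y = \<alpha> \<and> z = \<beta>"
      show ?thesis
        using step(3) a conn_sym[of H \<beta> \<alpha>] conn_trans[of H x \<beta> \<alpha>] by auto
    next
      assume a: "y = \<beta> \<and> z = \<alpha>"
      show ?thesis
        using step(3) a conn_sym[of H \<alpha> \<beta>] conn_trans[of H x \<alpha> \<beta>] by auto
    qed
  qed
qed

lemma conn_closed:
  assumes "conn E a b" "a \<in> V" "\<And>e. e \<in> E \<Longrightarrow> e \<subseteq> V"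
  shows "b \<in> V"
  using assms(1) unfolding conn_def
proof (induction rule: rtranclp_induct)
  case base then show ?case using assms(2) .
next
  case (step y z) then show ?case using assms(3) unfolding adj_def by blast
qed

section \<open>Edges displaying quartets\<close>

definition simple_edges :: "nat set set \<Rightarrow> bool" where
  "simple_edges E \<longleftrightarrow> (\<forall>e\<in>E. \<exists>u v. e = {u,v} \<and> u \<noteq> v)"

lemma simple_edges_neq: "simple_edges G \<Longrightarrow> {p,q} \<in> G \<Longrightarrow> p \<noteq> q"
  unfolding simple_edges_def by (metis doubleton_eq_iff insert_absorb2)

definition separates :: "nat set set \<Rightarrow> nat set \<Rightarrow> nat \<Rightarrow> nat \<Rightarrow> nat \<Rightarrow> nat \<Rightarrow> bool" where
  "separates E e P Q R S \<longleftrightarrow> e \<in> E \<and> conn (E - {e}) P Q \<and> conn (E - {e}) R S \<and> \<not> conn (E - {e}) P R"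

lemma separates_swap_right: "separates E e P Q R S \<Longrightarrow> separates E e P Q S R"
  unfolding separates_def by (meson conn_sym conn_trans)

text \<open>With both edges removed, P is cut off from Q and from R; each of the four connections
must then cross e resp. e', and the possible crossing directions contradict each other.\<close>
lemma separates_incompatible:
  assumes ef: "simple_edges E" and r1: "separates E e P Q R S" and r2: "separates E e' P R Q S"
  shows False
proof -
  have ne: "e \<noteq> e'" using r1 r2 unfolding separates_def by auto
  obtain \<alpha> \<beta> where e: "e = {\<alpha>,\<beta>}" using ef r1
    unfolding simple_edges_def separates_def by blast
  obtain \<gamma> \<delta> where e': "e' = {\<gamma>,\<delta>}" using ef r2
    unfolding simple_edges_def separates_def by blast
  define H where "H = E - {e, e'}"
  have E1: "E - {e} = insert e' H" using ne r2 unfolding H_def separates_def by auto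
  have E2: "E - {e'} = insert e H" using ne r1 unfolding H_def separates_def by auto
  have nPR: "\<not> conn (insert e' H) P R" using r1 E1 unfolding separates_def by simp
  have nPQ: "\<not> conn (insert e H) P Q" using r2 E2 unfolding separates_def by simp
  have nPRH: "\<not> conn H P R" using nPR conn_mono[of H P R "insert e' H"] by auto
  have nPQH: "\<not> conn H P Q" using nPQ conn_mono[of H P Q "insert e H"] by auto
  have c1: "conn (insert {\<gamma>,\<delta>} H) P Q" using r1 E1 e' unfolding separates_def by simp
  have c2: "conn (insert {\<gamma>,\<delta>} H) R S" using r1 E1 e' unfolding separates_def by simp
  have c3: "conn (insert {\<alpha>,\<beta>} H) P R" using r2 E2 e unfolding separates_def by simp
  have c4: "conn (insert {\<alpha>,\<beta>} H) Q S" using r2 E2 e unfolding separates_def by simp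
  have lift1: "conn (insert {\<alpha>,\<beta>} H) x y" if "conn H x \<alpha>" "conn H \<beta> y" for x y
    using conn_trans[OF conn_trans[OF conn_mono[OF that(1)] conn_edge] conn_mono[OF that(2)]]
    by (metis insertI1 subset_insertI)
  have lift1': "conn (insert {\<alpha>,\<beta>} H) x y" if "conn H x \<beta>" "conn H \<alpha> y" for x y
    using lift1[of x y] that by (metis conn_sym lift1)
  have lift2: "conn (insert {\<gamma>,\<delta>} H) x y" if "conn H x \<gamma>" "conn H \<delta> y" for x y
    using conn_trans[OF conn_trans[OF conn_mono[OF that(1)] conn_edge] conn_mono[OF that(2)]]
    by (metis insertI1 subset_insertI)
  have lift2': "conn (insert {\<gamma>,\<delta>} H) x y" if "conn H x \<delta>" "conn H \<gamma> y" for x y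
    using that by (metis conn_sym lift2)
  note d1 = conn_insert_edgeD[OF c1] and d2 = conn_insert_edgeD[OF c2]
    and d3 = conn_insert_edgeD[OF c3] and d4 = conn_insert_edgeD[OF c4]
  note nPR' = nPR[unfolded e'] and nPQ' = nPQ[unfolded e]
  show False
    using d1 d2 d3 d4 nPRH nPQH nPR' nPQ' lift1 lift1' lift2 lift2' conn_sym conn_trans
    by meson
qed

section \<open>Edge contraction\<close>

definition merge :: "nat \<Rightarrow> nat \<Rightarrow> nat \<Rightarrow> nat" where
  "merge u v = (\<lambda>w. if w = v then u else w)"

definition contract_edges :: "nat set set \<Rightarrow> nat \<Rightarrow> nat \<Rightarrow> nat set set" where
  "contract_edges G u v = (\<lambda>e. merge u v ` e) ` (G - {{u,v}})"

lemma contract_simps: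
  "verts (contract F u v) = verts F - {v}"
  "edges (contract F u v) = contract_edges (edges F) u v"
  "lab (contract F u v) = merge u v \<circ> lab F"
  unfolding contract_def contract_edges_def merge_def Let_def by auto

lemma merge_doubleton: "merge u v ` {y,z} = {merge u v y, merge u v z}" by auto

lemma merge_eq_other: "s \<noteq> u \<Longrightarrow> merge u v s' = s \<Longrightarrow> s' = s"
  unfolding merge_def by (auto split: if_splits)

lemma merge_eq_target: "merge u v s' = u \<Longrightarrow> s' = u \<or> s' = v"
  unfolding merge_def by (auto split: if_splits)

lemma merge_other: "s \<noteq> v \<Longrightarrow> merge u v s = s"
  unfolding merge_def by simp

lemma conn_contract_edges:
  assumes "conn G p q"
  shows "conn (contract_edges G u v) (merge u v p) (merge u v q)"
  using assms
proof (rule conn_map)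
  fix y z assume "adj G y z"
  then have "{y,z} \<in> G" by (simp add: adj_def)
  show "adj (contract_edges G u v) (merge u v y) (merge u v z) \<or> merge u v y = merge u v z"
  proof (cases "{y,z} = {u,v}")
    case True
    then have "y \<in> {u,v}" "z \<in> {u,v}" by auto
    then have "merge u v y = u" "merge u v z = u" unfolding merge_def by auto
    then show ?thesis by simp
  next
    case False
    then have "merge u v ` {y,z} \<in> contract_edges G u v" using \<open>{y,z} \<in> G\<close>
      unfolding contract_edges_def by blast
    then show ?thesis unfolding adj_def by (simp add: merge_doubleton)
  qed
qed

lemma conn_of_merge_eq:
  assumes "merge u v a = merge u v b" "{u,v} \<in> G"
  shows "conn G a b"
proof -
  have "a = b \<or> (a = u \<and> b = v) \<or> (a = v \<and> b = u)" using assms(1)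
    by (auto simp: merge_def split: if_splits)
  then show ?thesis using conn_edge[OF assms(2)] conn_sym by auto
qed

lemma conn_contract_edgesD:
  assumes "conn (contract_edges G u v) s t" "{u,v} \<in> G" "simple_edges G"
  shows "\<And>s' t'. merge u v s' = s \<Longrightarrow> merge u v t' = t \<Longrightarrow> conn G s' t'"
  using assms(1) unfolding conn_def[of "contract_edges G u v"]
proof (induction rule: rtranclp_induct)
  case base then show ?case using conn_of_merge_eq[OF _ assms(2)] by metis
next
  case (step y z)
  from step(2) obtain e where e: "e \<in> G" "e \<noteq> {u,v}" "merge u v ` e = {y,z}"
    unfolding adj_def contract_edges_def by auto
  obtain c d where cd: "e = {c,d}" using e(1) assms(3) unfolding simple_edges_def by blast
  have "(merge u v c = y \<and> merge u v d = z) \<or> (merge u v c = z \<and> merge u v d = y)"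
    using e(3) cd by (auto simp: doubleton_eq_iff)
  then show ?case
  proof
    assume h: "merge u v c = y \<and> merge u v d = z"
    have "conn G s' c" using step(3)[of s' c] step(4) h by auto
    moreover have "conn G c d" using conn_edge e(1) cd by simp
    moreover have "conn G d t'" using conn_of_merge_eq[OF _ assms(2)] h step(5) by metis
    ultimately show ?thesis using conn_trans by blast
  next
    assume h: "merge u v c = z \<and> merge u v d = y"
    have "conn G s' d" using step(3)[of s' d] step(4) h by auto
    moreover have "conn G d c" using conn_edge e(1) cd by (simp add: insert_commute)
    moreover have "conn G c t'" using conn_of_merge_eq[OF _ assms(2)] h step(5) by metis
    ultimately show ?thesis using conn_trans by blast
  qed
qed

lemma contract_edges_preimage:
  assumes "{s,t} \<in> contract_edges G u v" "simple_edges G"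
  shows "\<exists>s' t'. {s',t'} \<in> G \<and> {s',t'} \<noteq> {u,v} \<and> merge u v s' = s \<and> merge u v t' = t"
proof -
  obtain e where e: "e \<in> G" "e \<noteq> {u,v}" "merge u v ` e = {s,t}" using assms(1)
    unfolding contract_edges_def by auto
  obtain c d where cd: "e = {c,d}" using assms(2) e(1) unfolding simple_edges_def by blast
  have "{merge u v c, merge u v d} = {s,t}" using e(3) cd by simp
  then have "(merge u v c = s \<and> merge u v d = t) \<or> (merge u v c = t \<and> merge u v d = s)"
    by (auto simp: doubleton_eq_iff)
  then show ?thesis using e cd by (metis insert_commute)
qed

definition no_common_nbr :: "nat set set \<Rightarrow> nat \<Rightarrow> nat \<Rightarrow> bool" where
  "no_common_nbr G u v \<longleftrightarrow> \<not> (\<exists>z. {u,z} \<in> G \<and> {v,z} \<in> G)"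

lemma merge_image_cases:
  assumes "simple_edges G" "e \<in> G" "e \<noteq> {u,v}" "u \<noteq> v"
  shows "(v \<notin> e \<and> merge u v ` e = e) \<or> (\<exists>z. z \<noteq> u \<and> z \<noteq> v \<and> e = {v,z} \<and> merge u v ` e = {u,z})"
proof -
  obtain a b where ab: "e = {a,b}" "a \<noteq> b" using assms(1,2) unfolding simple_edges_def by blast
  show ?thesis
  proof (cases "v \<in> e")
    case False
    then have "merge u v ` e = e" unfolding merge_def by (auto simp: image_iff)
    then show ?thesis using False by auto
  next
    case True
    then obtain z where z: "e = {v,z}" using ab by auto
    have "z \<noteq> v" using z ab by auto
    moreover have "z \<noteq> u" using z assms(3) by auto
    moreover have "merge u v ` e = {u,z}" using z \<open>z \<noteq> v\<close> unfolding merge_def by auto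
    ultimately show ?thesis using z by auto
  qed
qed

text \<open>A common neighbour z of u and v would make the edges uz and vz coincide after merging.\<close>
lemma merge_image_inj:
  assumes "simple_edges G" "no_common_nbr G u v" "u \<noteq> v" "e1 \<in> G" "e2 \<in> G" "e1 \<noteq> {u,v}" "e2 \<noteq> {u,v}"
    "merge u v ` e1 = merge u v ` e2"
  shows "e1 = e2"
proof -
  note c1 = merge_image_cases[OF assms(1,4,6,3)] and c2 = merge_image_cases[OF assms(1,5,7,3)]
  have t: "\<not> ({u,z} \<in> G \<and> {v,z} \<in> G)" for z using assms(2)
    unfolding no_common_nbr_def by blast
  show ?thesis
  proof (cases "v \<in> e1")
    case False
    show ?thesis
    proof (cases "v \<in> e2")
      case False
      then show ?thesis using c1 c2 \<open>v \<notin> e1\<close> assms(8) by auto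
    next
      case True
      then obtain z where "e2 = {v,z}" "merge u v ` e2 = {u,z}" using c2 by auto
      then show ?thesis using c1 \<open>v \<notin> e1\<close> assms(8) assms(4,5) t[of z] by auto
    qed
  next
    case True
    then obtain z where z: "z \<noteq> u" "e1 = {v,z}" "merge u v ` e1 = {u,z}" using c1 by auto
    show ?thesis
    proof (cases "v \<in> e2")
      case False
      then show ?thesis using c2 z assms(8) assms(4,5) t[of z] by auto
    next
      case True
      then obtain z' where z': "z' \<noteq> u" "e2 = {v,z'}" "merge u v ` e2 = {u,z'}" using c2 by auto
      then have "z = z'" using z assms(8) by (auto simp: doubleton_eq_iff)
      then show ?thesis using z z' by simp
    qed
  qed
qed

lemma contract_edges_Diff:
  assumes "simple_edges G" "no_common_nbr G u v" "u \<noteq> v" "e0 \<in> G" "e0 \<noteq> {u,v}"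
  shows "contract_edges G u v - {merge u v ` e0} = contract_edges (G - {e0}) u v"
  using merge_image_inj[OF assms(1,2,3) _ assms(4) _ assms(5)] assms(4,5)
  unfolding contract_edges_def by auto

lemma separates_contract_edges:
  assumes ef: "simple_edges T" and uv: "{u,v} \<in> T" "u \<noteq> v" and tf: "no_common_nbr T u v"
    and r: "separates T e0 P Q R S" and ne: "e0 \<noteq> {u,v}"
  shows "separates (contract_edges T u v) (merge u v ` e0) (merge u v P) (merge u v Q) (merge u v R) (merge u v S)"
proof -
  have e0: "e0 \<in> T" using r unfolding separates_def by auto
  have eq: "contract_edges T u v - {merge u v ` e0} = contract_edges (T - {e0}) u v"
    using contract_edges_Diff[OF ef tf uv(2) e0 ne] by simp
  have ef': "simple_edges (T - {e0})" using ef unfolding simple_edges_def by auto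
  have uv': "{u,v} \<in> T - {e0}" using uv e0 ne by auto
  have "merge u v ` e0 \<in> contract_edges T u v" using e0 ne unfolding contract_edges_def by auto
  moreover have "conn (contract_edges T u v - {merge u v ` e0}) (merge u v P) (merge u v Q)"
    using r eq conn_contract_edges unfolding separates_def by auto
  moreover have "conn (contract_edges T u v - {merge u v ` e0}) (merge u v R) (merge u v S)"
    using r eq conn_contract_edges unfolding separates_def by auto
  moreover have "\<not> conn (contract_edges T u v - {merge u v ` e0}) (merge u v P) (merge u v R)"
    using r eq conn_contract_edgesD[OF _ uv' ef', of "merge u v P" "merge u v R" P R]
      unfolding separates_def by auto
  ultimately show ?thesis unfolding separates_def by auto
qed

lemma separates_contract_edgesD:
  assumes ef: "simple_edges T" and uv: "{u,v} \<in> T" "u \<noteq> v" and tf: "no_common_nbr T u v"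
    and r: "separates (contract_edges T u v) e'' (merge u v P) (merge u v Q) (merge u v R) (merge u v S)"
  shows "\<exists>e'. e' \<noteq> {u,v} \<and> separates T e' P Q R S"
proof -
  from r obtain e0 where e0: "e0 \<in> T" "e0 \<noteq> {u,v}" "e'' = merge u v ` e0"
    unfolding separates_def contract_edges_def by auto
  have eq: "contract_edges T u v - {e''} = contract_edges (T - {e0}) u v"
    using contract_edges_Diff[OF ef tf uv(2) e0(1,2)] e0(3) by simp
  have ef': "simple_edges (T - {e0})" using ef unfolding simple_edges_def by auto
  have uv': "{u,v} \<in> T - {e0}" using uv e0 by auto
  have "conn (T - {e0}) P Q" using r eq conn_contract_edgesD[OF _ uv' ef'] unfolding separates_def
    by auto
  moreover have "conn (T - {e0}) R S" using r eq conn_contract_edgesD[OF _ uv' ef']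
    unfolding separates_def by auto
  moreover have "\<not> conn (T - {e0}) P R" using r eq conn_contract_edges[of "T - {e0}" P R u v]
    unfolding separates_def by auto
  ultimately show ?thesis using e0 unfolding separates_def by auto
qed

lemma conn_image_iff:
  assumes inj: "inj_on f V" and sub: "\<And>e. e \<in> E \<Longrightarrow> e \<subseteq> V"
    and ef: "simple_edges E"
    and P: "P \<in> V" and Q: "Q \<in> V"
  shows "conn ((\<lambda>e. f ` e) ` E) (f P) (f Q) \<longleftrightarrow> conn E P Q"
proof
  assume c: "conn ((\<lambda>e. f ` e) ` E) (f P) (f Q)"
  define h where "h = inv_into V f"
  have hf: "h (f y) = y" if "y \<in> V" for y using inj that unfolding h_def by simp
  have "conn E (h (f P)) (h (f Q))"
  proof (rule conn_map[OF c])
    fix y z assume "adj ((\<lambda>e. f ` e) ` E) y z"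
    then obtain e1 where e1: "e1 \<in> E" "{y,z} = f ` e1" unfolding adj_def by auto
    obtain c d where cd: "e1 = {c,d}" using ef e1(1) unfolding simple_edges_def by blast
    have cdV: "c \<in> V" "d \<in> V" using sub[OF e1(1)] cd by auto
    have "{y,z} = {f c, f d}" using e1 cd by simp
    then have "(y = f c \<and> z = f d) \<or> (y = f d \<and> z = f c)" by (auto simp: doubleton_eq_iff)
    then have "{h y, h z} = {c,d}" using hf cdV by auto
    then show "adj E (h y) (h z) \<or> h y = h z" using e1(1) cd unfolding adj_def by simp
  qed
  then show "conn E P Q" using hf P Q by simp
next
  assume "conn E P Q"
  then show "conn ((\<lambda>e. f ` e) ` E) (f P) (f Q)"
  proof (rule conn_map)
    fix y z assume "adj E y z"
    then show "adj ((\<lambda>e. f ` e) ` E) (f y) (f z) \<or> f y = f z" unfolding adj_def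
      by (metis image_empty image_eqI image_insert)
  qed
qed

lemma image_image_Diff:
  assumes inj: "inj_on f V" and sub: "\<And>e. e \<in> E \<Longrightarrow> e \<subseteq> V"
    and e: "e \<in> E"
  shows "(\<lambda>e. f ` e) ` E - {f ` e} = (\<lambda>e. f ` e) ` (E - {e})"
proof -
  have "f ` e1 = f ` e \<Longrightarrow> e1 \<in> E \<Longrightarrow> e1 = e" for e1
    using inj_on_image_eq_iff[OF inj sub sub[OF e]] by blast
  then show ?thesis using e by auto
qed

lemma separates_image_iff:
  assumes inj: "inj_on f V" and sub: "\<And>e. e \<in> E \<Longrightarrow> e \<subseteq> V"
    and ef: "simple_edges E"
    and V: "P \<in> V" "Q \<in> V" "R \<in> V" "S \<in> V" and True: "e \<in> E"
  shows "separates E e P Q R S \<longleftrightarrow> separates ((\<lambda>e. f ` e) ` E) (f ` e) (f P) (f Q) (f R) (f S)"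
proof -
  have sub': "\<And>e'. e' \<in> E - {e} \<Longrightarrow> e' \<subseteq> V" using sub by auto
  have ef': "simple_edges (E - {e})" using ef unfolding simple_edges_def by auto
  have eq: "(\<lambda>e. f ` e) ` E - {f ` e} = (\<lambda>e. f ` e) ` (E - {e})"
    by (rule image_image_Diff[OF inj]) (use sub True in auto)
  have ce: "conn ((\<lambda>e. f ` e) ` (E - {e})) (f A) (f B) \<longleftrightarrow> conn (E - {e}) A B"
    if "A \<in> V" "B \<in> V" for A B
    by (rule conn_image_iff[OF inj sub' ef' that])
  have m: "f ` e \<in> (\<lambda>e. f ` e) ` E" using True by auto
  show ?thesis unfolding separates_def eq using ce[OF V(1) V(2)] ce[OF V(3) V(4)] ce[OF V(1) V(3)] m True
    by blast
qed

section \<open>X-forests and their quartets\<close>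

lemma xforest_edge_pair:
  "is_xforest X F \<Longrightarrow> e \<in> edges F \<Longrightarrow> \<exists>u v. e = {u,v} \<and> u \<noteq> v \<and> u \<in> verts F \<and> v \<in> verts F"
  by (simp add: is_xforest_def)

lemma xforest_simple_edges: "is_xforest X F \<Longrightarrow> simple_edges (edges F)"
  unfolding simple_edges_def using xforest_edge_pair by fast

lemma xforest_edge_subset: "is_xforest X F \<Longrightarrow> e \<in> edges F \<Longrightarrow> e \<subseteq> verts F"
  using xforest_edge_pair by fast

lemma xforest_edge_vertex: "is_xforest X F \<Longrightarrow> e \<in> edges F \<Longrightarrow> v \<in> e \<Longrightarrow> v \<in> verts F"
  using xforest_edge_subset by blast

lemma xforest_lab_in_verts: "is_xforest X F \<Longrightarrow> x \<in> X \<Longrightarrow> lab F x \<in> verts F"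
  by (auto simp: is_xforest_def)

lemma xforest_acyclic: "is_xforest X F \<Longrightarrow> {u,v} \<in> edges F \<Longrightarrow> \<not> conn (edges F - {{u,v}}) u v"
  by (simp add: is_xforest_def)

lemma xforest_unlabeled_deg:
  assumes "is_xforest X F" "v \<in> verts F" "\<not> labeled X F v"
  shows "3 \<le> deg (edges F) v"
proof -
  have "\<forall>v \<in> verts F. \<not> labeled X F v \<longrightarrow> deg (edges F) v \<ge> 3"
    using assms(1) unfolding is_xforest_def by (elim conjE)
  then show ?thesis using assms(2,3) by blast
qed

lemma xforest_finite_edges:
  assumes F: "is_xforest X F"
  shows "finite (edges F)"
proof (rule finite_subset)
  show "edges F \<subseteq> Pow (verts F)" using xforest_edge_subset[OF F] by blast
  show "finite (Pow (verts F))" using F by (simp add: is_xforest_def)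
qed

lemma xforest_no_common_nbr:
  assumes F: "is_xforest X C" and uv: "{u,v} \<in> edges C" "u \<noteq> v"
  shows "no_common_nbr (edges C) u v"
  unfolding no_common_nbr_def
proof
  assume "\<exists>z. {u,z} \<in> edges C \<and> {v,z} \<in> edges C"
  then obtain z where z: "{u,z} \<in> edges C" "{v,z} \<in> edges C" by blast
  have ef: "simple_edges (edges C)" using xforest_simple_edges[OF F] .
  have zu: "z \<noteq> u" using ef z(1) unfolding simple_edges_def
    by (metis doubleton_eq_iff insert_absorb2)
  have zv: "z \<noteq> v" using ef z(2) unfolding simple_edges_def
    by (metis doubleton_eq_iff insert_absorb2)
  have a: "{u,v} \<in> edges C - {{u,z}}" using uv zv by (auto simp: doubleton_eq_iff)
  have b: "{v,z} \<in> edges C - {{u,z}}" using z uv(2) by (auto simp: doubleton_eq_iff)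
  have "conn (edges C - {{u,z}}) u z" using conn_trans[OF conn_edge[OF a] conn_edge[OF b]] .
  then show False using xforest_acyclic[OF F z(1)] by simp
qed

lemma xforest_component_beyond_edge_mono:
  assumes F: "is_xforest X T" and st: "{s,t} \<in> edges T"
    and tt': "{t,t'} \<in> edges T" "t' \<noteq> s"
  shows "{z. conn (edges T - {{t,t'}}) t' z} \<subset> {z. conn (edges T - {{s,t}}) t z}"
proof -
  define E where "E = edges T"
  have ac': "\<not> conn (E - {{t,t'}}) t' t" using xforest_acyclic[OF F tt'(1)] conn_sym E_def by blast
  define H where "H = E - {{t,t'}, {s,t}}"
  have neq: "{s,t} \<noteq> {t,t'}" using tt'(2) by (auto simp: doubleton_eq_iff)
  have HE: "E - {{t,t'}} = insert {s,t} H" using H_def st neq E_def by auto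
  have "{z. conn (E - {{t,t'}}) t' z} \<subseteq> {z. conn (E - {{s,t}}) t z}"
  proof
    fix z assume "z \<in> {z. conn (E - {{t,t'}}) t' z}"
    then have "conn (insert {s,t} H) t' z" using HE by simp
    from conn_insert_edgeD[OF this]
    show "z \<in> {z. conn (E - {{s,t}}) t z}"
    proof (elim disjE conjE)
      assume c: "conn H t' z"
      have c1: "conn (E - {{s,t}}) t' z" by (rule conn_mono[OF c]) (auto simp: H_def)
      have "{t,t'} \<in> E - {{s,t}}" using tt'(1) neq E_def by auto
      then show ?thesis using conn_trans[OF conn_edge c1] by simp
    next
      assume c: "conn H t' s"
      have c1: "conn (E - {{t,t'}}) t' s" by (rule conn_mono[OF c]) (auto simp: H_def)
      have "{s,t} \<in> E - {{t,t'}}" using st neq E_def by auto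
      then show ?thesis using conn_trans[OF c1 conn_edge] ac' by blast
    next
      assume c: "conn H t' t"
      have "conn (E - {{t,t'}}) t' t" by (rule conn_mono[OF c]) (auto simp: H_def)
      then show ?thesis using ac' by blast
    qed
  qed
  moreover have "t \<notin> {z. conn (E - {{t,t'}}) t' z}" using ac' by simp
  ultimately show ?thesis unfolding E_def by auto
qed

text \<open>Walking away from s, every unlabeled vertex offers a further edge, and the part of the
forest beyond it shrinks; so a label is eventually reached.\<close>
lemma xforest_leaf_beyond_edge:
  assumes F: "is_xforest X T"
  shows "{s,t} \<in> edges T \<Longrightarrow> s \<noteq> t \<Longrightarrow> \<exists>y\<in>X. conn (edges T - {{s,t}}) t (lab T y)"
proof (induction "card {z. conn (edges T - {{s,t}}) t z}" arbitrary: s t rule: less_induct)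
  case less
  show ?case
  proof (cases "labeled X T t")
    case True
    then obtain y where "y \<in> X" "lab T y = t" unfolding labeled_def by auto
    then show ?thesis using conn_refl by metis
  next
    case False
    have tV: "t \<in> verts T" using xforest_edge_subset[OF F less(2)] by auto
    have d: "3 \<le> card {e\<in>edges T. t \<in> e}"
      using xforest_unlabeled_deg[OF F tV False] by (simp add: deg_def)
    have "\<not> {e\<in>edges T. t \<in> e} \<subseteq> {{s,t}}"
    proof
      assume "{e\<in>edges T. t \<in> e} \<subseteq> {{s,t}}"
      then have "card {e\<in>edges T. t \<in> e} \<le> card {{s,t}}" by (intro card_mono) auto
      then show False using d by simp
    qed
    then obtain e where e: "e \<in> edges T" "t \<in> e" "e \<noteq> {s,t}" by blast
    obtain p q where "e = {p,q}" "p \<noteq> q" using xforest_edge_pair[OF F e(1)] by blast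
    then obtain t' where t': "e = {t,t'}" "t' \<noteq> t" using e(2) by auto
    have t's: "t' \<noteq> s" using t' e(3) by (auto simp: insert_commute)
    have sub: "{z. conn (edges T - {{t,t'}}) t' z} \<subset> {z. conn (edges T - {{s,t}}) t z}"
      using xforest_component_beyond_edge_mono[OF F less(2)] e(1) t' t's by blast
    have fin: "finite {z. conn (edges T - {{s,t}}) t z}"
    proof (rule finite_subset)
      show "{z. conn (edges T - {{s,t}}) t z} \<subseteq> verts T"
        using conn_closed[OF _ tV, of "edges T - {{s,t}}"] xforest_edge_subset[OF F] by blast
    qed (use F in \<open>simp add: is_xforest_def\<close>)
    have "card {z. conn (edges T - {{t,t'}}) t' z} < card {z. conn (edges T - {{s,t}}) t z}"
      using psubset_card_mono[OF fin sub] .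
    moreover have "{t,t'} \<in> edges T" using e(1) t' by simp
    ultimately obtain y where y: "y \<in> X" "conn (edges T - {{t,t'}}) t' (lab T y)"
      using less(1)[of t t'] t'(2) by blast
    then show ?thesis using sub by auto
  qed
qed

lemma xforest_leaf_behind:
  assumes F: "is_xforest X T" and st: "{s,t} \<in> edges T" "s \<noteq> t"
    and c1: "conn (edges T - {{s,t}}) s c1" and c2: "conn (edges T - {{s,t}}) s c2"
  shows "\<exists>y\<in>X. conn {e\<in>edges T. c1 \<notin> e \<and> s \<notin> e \<and> c2 \<notin> e} t (lab T y)"
proof -
  define E0 where "E0 = edges T - {{s,t}}"
  obtain y where y: "y \<in> X" "conn E0 t (lab T y)" using xforest_leaf_beyond_edge[OF F st] E0_def
    by blast
  have nts: "\<not> conn E0 t s" using xforest_acyclic[OF F st(1)] conn_sym E0_def by blast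
  define G1 where "G1 = {e\<in>E0. s \<notin> e}"
  have g1: "conn G1 t (lab T y)" using conn_avoiding[OF y(2) nts] G1_def by simp
  have n1: "\<not> conn G1 t c1"
  proof
    assume "conn G1 t c1"
    then have "conn E0 t c1" by (rule conn_mono) (auto simp: G1_def)
    then show False using nts conn_trans conn_sym c1 E0_def by metis
  qed
  define G2 where "G2 = {e\<in>G1. c1 \<notin> e}"
  have g2: "conn G2 t (lab T y)" using conn_avoiding[OF g1 n1] G2_def by simp
  have n2: "\<not> conn G2 t c2"
  proof
    assume "conn G2 t c2"
    then have "conn E0 t c2" by (rule conn_mono) (auto simp: G2_def G1_def)
    then show False using nts conn_trans conn_sym c2 E0_def by metis
  qed
  have g3: "conn {e\<in>G2. c2 \<notin> e} t (lab T y)" using conn_avoiding[OF g2 n2] by simp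
  have "conn {e\<in>edges T. c1 \<notin> e \<and> s \<notin> e \<and> c2 \<notin> e} t (lab T y)"
    by (rule conn_mono[OF g3]) (auto simp: G2_def G1_def E0_def)
  then show ?thesis using y(1) by blast
qed

lemma xforest_leaf_behind_nbr:
  assumes F: "is_xforest X T" and wa: "{w,a} \<in> edges T" and wb: "{w,b} \<in> edges T"
    and "a \<noteq> b" "a \<noteq> w" "b \<noteq> w"
  shows "{a,\<alpha>} \<in> edges T \<Longrightarrow> \<alpha> \<noteq> w \<Longrightarrow> \<exists>y\<in>X. conn {e\<in>edges T. w \<notin> e \<and> a \<notin> e \<and> b \<notin> e} \<alpha> (lab T y)"
proof -
  assume a\<alpha>: "{a,\<alpha>} \<in> edges T" and "\<alpha> \<noteq> w"
  have e1: "{a,w} \<in> edges T - {{a,\<alpha>}}" using wa \<open>\<alpha> \<noteq> w\<close>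
    by (auto simp: doubleton_eq_iff insert_commute)
  have e2: "{w,b} \<in> edges T - {{a,\<alpha>}}" using wb assms(4-6) by (auto simp: doubleton_eq_iff)
  show ?thesis
  proof (rule xforest_leaf_behind[OF F a\<alpha>])
    show "a \<noteq> \<alpha>" using simple_edges_neq[OF xforest_simple_edges[OF F] a\<alpha>] .
    show "conn (edges T - {{a,\<alpha>}}) a w" using conn_edge[OF e1] .
    show "conn (edges T - {{a,\<alpha>}}) a b" using conn_trans[OF conn_edge[OF e1] conn_edge[OF e2]] .
  qed
qed

lemma iso_sym:
  assumes F: "is_xforest X F" and iso: "iso X F G"
  shows "iso X G F"
proof -
  obtain f where f: "bij_betw f (verts F) (verts G)" "edges G = (\<lambda>e. f ` e) ` edges F"
    "\<And>x. x \<in> X \<Longrightarrow> lab G x = f (lab F x)"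
    using iso unfolding iso_def by metis
  define h where "h = inv_into (verts F) f"
  have b: "bij_betw h (verts G) (verts F)" unfolding h_def by (rule bij_betw_inv_into[OF f(1)])
  have inj: "inj_on f (verts F)" using f(1) bij_betw_def by blast
  have hf: "h (f y) = y" if "y \<in> verts F" for y using inj that unfolding h_def by simp
  have hfe: "h ` (f ` e) = e" if "e \<in> edges F" for e
  proof -
    have "e \<subseteq> verts F" using xforest_edge_subset[OF F that] .
    then have "h ` f ` e = (\<lambda>y. h (f y)) ` e" by (simp add: image_image)
    also have "\<dots> = e" using \<open>e \<subseteq> verts F\<close> hf by (simp add: subset_iff)
    finally show ?thesis .
  qed
  have ee: "(\<lambda>e. h ` e) ` edges G = edges F"
  proof -
    have "(\<lambda>e. h ` e) ` edges G = (\<lambda>e. h ` (f ` e)) ` edges F"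
      unfolding f(2) image_image ..
    also have "\<dots> = (\<lambda>e. e) ` edges F" using hfe by (intro image_cong) auto
    finally show ?thesis by simp
  qed
  have ll: "lab F x = h (lab G x)" if "x \<in> X" for x
    using f(3)[OF that] hf xforest_lab_in_verts[OF F that] by simp
  show ?thesis unfolding iso_def using b ee ll by auto
qed

definition has_quartet :: "xforest \<Rightarrow> nat \<Rightarrow> nat \<Rightarrow> nat \<Rightarrow> nat \<Rightarrow> bool" where
  "has_quartet C p q r s \<longleftrightarrow> (\<exists>e. separates (edges C) e (lab C p) (lab C q) (lab C r) (lab C s))"

lemma iso_has_quartet_iff:
  assumes F: "is_xforest X F" and iso: "iso X F G" and X: "p \<in> X" "q \<in> X" "r \<in> X" "s \<in> X"
  shows "has_quartet F p q r s \<longleftrightarrow> has_quartet G p q r s"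
proof -
  obtain f where f: "bij_betw f (verts F) (verts G)" "edges G = (\<lambda>e. f ` e) ` edges F"
    "\<And>x. x \<in> X \<Longrightarrow> lab G x = f (lab F x)"
    using iso unfolding iso_def by metis
  have inj: "inj_on f (verts F)" using f(1) bij_betw_def by blast
  note sub = xforest_edge_subset[OF F] and ef = xforest_simple_edges[OF F]
  note L = xforest_lab_in_verts[OF F]
  have fw: "separates (edges F) e (lab F p) (lab F q) (lab F r) (lab F s) \<longleftrightarrow>
     separates ((\<lambda>e. f ` e) ` edges F) (f ` e) (f (lab F p)) (f (lab F q)) (f (lab F r)) (f (lab F s))"
    if "e \<in> edges F" for e
    by (rule separates_image_iff[OF inj _ ef L[OF X(1)] L[OF X(2)] L[OF X(3)] L[OF X(4)] that])
       (use sub in auto)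
  have lg: "lab G p = f (lab F p)" "lab G q = f (lab F q)" "lab G r = f (lab F r)" "lab G s = f (lab F s)"
    using f(3) X by auto
  show ?thesis
  proof
    assume "has_quartet F p q r s"
    then obtain e where r: "separates (edges F) e (lab F p) (lab F q) (lab F r) (lab F s)"
      unfolding has_quartet_def by blast
    then have e: "e \<in> edges F" unfolding separates_def by simp
    have "separates ((\<lambda>e. f ` e) ` edges F) (f ` e) (f (lab F p)) (f (lab F q)) (f (lab F r)) (f (lab F s))"
      using fw[OF e] r by blast
    then have "separates (edges G) (f ` e) (lab G p) (lab G q) (lab G r) (lab G s)"
      unfolding lg f(2) .
    then show "has_quartet G p q r s" unfolding has_quartet_def by blast
  next
    assume "has_quartet G p q r s"
    then obtain e' where r: "separates (edges G) e' (lab G p) (lab G q) (lab G r) (lab G s)"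
      unfolding has_quartet_def by blast
    then obtain e where e: "e \<in> edges F" "e' = f ` e" unfolding separates_def f(2) by auto
    have "separates ((\<lambda>e. f ` e) ` edges F) (f ` e) (f (lab F p)) (f (lab F q)) (f (lab F r)) (f (lab F s))"
      using r unfolding lg f(2) e(2) .
    then have "separates (edges F) e (lab F p) (lab F q) (lab F r) (lab F s)"
      using fw[OF e(1)] by blast
    then show "has_quartet F p q r s" unfolding has_quartet_def by blast
  qed
qed

lemma has_quartet_contract:
  assumes F: "is_xforest X C" and uv: "{u,v} \<in> edges C" "u \<noteq> v"
    and r: "separates (edges C) e (lab C p) (lab C q) (lab C r) (lab C s)" and ne: "e \<noteq> {u,v}"
  shows "has_quartet (contract C u v) p q r s"
proof -
  have "separates (contract_edges (edges C) u v) (merge u v ` e) (merge u v (lab C p)) (merge u v (lab C q)) (merge u v (lab C r)) (merge u v (lab C s))"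
    by (rule separates_contract_edges[OF xforest_simple_edges[OF F] uv xforest_no_common_nbr[OF F uv] r ne])
  then show ?thesis unfolding has_quartet_def contract_simps by auto
qed

lemma has_quartet_contractD:
  assumes ef: "simple_edges (edges C)" and uv: "{u,v} \<in> edges C" "u \<noteq> v"
    and tf: "no_common_nbr (edges C) u v"
    and q: "has_quartet (contract C u v) p q r s"
  shows "has_quartet C p q r s"
proof -
  obtain e where "separates (contract_edges (edges C) u v) e (merge u v (lab C p)) (merge u v (lab C q)) (merge u v (lab C r)) (merge u v (lab C s))"
    using q unfolding has_quartet_def contract_simps by auto
  from separates_contract_edgesD[OF ef uv tf this] show ?thesis unfolding has_quartet_def by blast
qed

section \<open>Binary X-trees\<close>

lemma binary_xtree_xforest: "binary_xtree X C \<Longrightarrow> is_xforest X C"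
  unfolding binary_xtree_def is_xtree_def by simp

lemma binary_xtree_vertex_cases: "binary_xtree X C \<Longrightarrow> v \<in> verts C \<Longrightarrow>
   (labeled X C v \<and> deg (edges C) v = 1) \<or> (\<not> labeled X C v \<and> deg (edges C) v = 3)"
  unfolding binary_xtree_def by blast

lemma card_le_deg: "finite E \<Longrightarrow> S \<subseteq> E \<Longrightarrow> (\<And>e. e \<in> S \<Longrightarrow> v \<in> e) \<Longrightarrow> card S \<le> deg E v"
  unfolding deg_def by (intro card_mono) auto

lemma binary_xtree_deg_le_3: "binary_xtree X C \<Longrightarrow> e \<in> edges C \<Longrightarrow> v \<in> e \<Longrightarrow> deg (edges C) v \<le> 3"
  using binary_xtree_vertex_cases[of X C v] xforest_edge_vertex[OF binary_xtree_xforest] by fastforce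

lemma binary_xtree_no_four_edges:
  assumes B: "binary_xtree X C"
    and E: "e1 \<in> edges C" "e2 \<in> edges C" "e3 \<in> edges C" "e4 \<in> edges C"
    and d: "e1 \<noteq> e2" "e1 \<noteq> e3" "e1 \<noteq> e4" "e2 \<noteq> e3" "e2 \<noteq> e4" "e3 \<noteq> e4"
    and v: "v \<in> e1" "v \<in> e2" "v \<in> e3" "v \<in> e4"
  shows False
proof -
  have "card {e1,e2,e3,e4} \<le> deg (edges C) v"
    using card_le_deg[OF xforest_finite_edges[OF binary_xtree_xforest[OF B]], of "{e1,e2,e3,e4}" v] E v
      by auto
  moreover have "card {e1,e2,e3,e4} = 4" using d by auto
  moreover have "deg (edges C) v \<le> 3" using binary_xtree_deg_le_3[OF B E(1) v(1)] .
  ultimately show False by simp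
qed

lemma binary_xtree_edges_at:
  assumes B: "binary_xtree X C" and E: "e1 \<in> edges C" "e2 \<in> edges C" "e3 \<in> edges C"
    and d: "e1 \<noteq> e2" "e1 \<noteq> e3" "e2 \<noteq> e3"
    and v: "v \<in> e1" "v \<in> e2" "v \<in> e3" and e: "e \<in> edges C" "v \<in> e"
  shows "e = e1 \<or> e = e2 \<or> e = e3"
  using binary_xtree_no_four_edges[OF B E e(1) _ _ _ _ _ _ v e(2)] d by blast

lemma binary_xtree_two_edges:
  assumes B: "binary_xtree X C" and E: "e1 \<in> edges C" "e2 \<in> edges C" and d: "e1 \<noteq> e2"
    and v: "v \<in> e1" "v \<in> e2"
  shows "\<not> labeled X C v" "deg (edges C) v = 3"
proof -
  have "card {e1,e2} \<le> deg (edges C) v"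
    using card_le_deg[OF xforest_finite_edges[OF binary_xtree_xforest[OF B]], of "{e1,e2}" v] E v by auto
  then have "2 \<le> deg (edges C) v" using d by simp
  then show "\<not> labeled X C v" "deg (edges C) v = 3"
    using binary_xtree_vertex_cases[OF B xforest_edge_vertex[OF binary_xtree_xforest[OF B] E(1) v(1)]]
      by auto
qed

lemma binary_xtree_leaf_edge_unique:
  assumes B: "binary_xtree X C" and l: "labeled X C v" and E: "e1 \<in> edges C" "e2 \<in> edges C"
    and v: "v \<in> e1" "v \<in> e2"
  shows "e1 = e2"
  using binary_xtree_two_edges[OF B E _ v] l by blast

lemma binary_xtree_no_safe_del:
  assumes B: "binary_xtree X C" and X: "3 \<le> card X" "finite X"
    and uv: "{u,v} \<in> edges C" "u \<noteq> v"
    and sd: "safe_del X C u v"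
  shows False
proof -
  have F: "is_xforest X C" using binary_xtree_xforest[OF B] .
  have lu: "labeled X C u" using sd binary_xtree_deg_le_3[OF B uv(1)] unfolding safe_del_def by fastforce
  have lv: "labeled X C v" using sd binary_xtree_deg_le_3[OF B uv(1)] unfolding safe_del_def by fastforce
  have uV: "u \<in> verts C" using xforest_edge_vertex[OF F uv(1)] by simp
  have cl: "z \<in> {u,v}" if "conn (edges C) u z" for z
    using that unfolding conn_def
  proof (induction rule: rtranclp_induct)
    case base then show ?case by simp
  next
    case (step y z)
    have yz: "{y,z} \<in> edges C" using step(2) unfolding adj_def .
    have "{y,z} = {u,v}"
    proof (cases "y = u")
      case True then show ?thesis using binary_xtree_leaf_edge_unique[OF B lu yz uv(1)] by simp
    next
      case False then have "y = v" using step(3) by simp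
      then show ?thesis using binary_xtree_leaf_edge_unique[OF B lv yz uv(1)] by simp
    qed
    then show ?case by (auto simp: doubleton_eq_iff)
  qed
  have allc: "\<forall>a\<in>verts C. \<forall>b\<in>verts C. conn (edges C) a b"
    using B unfolding binary_xtree_def is_xtree_def by simp
  have "verts C \<subseteq> {u,v}" using allc uV cl by blast
  then have "lab C ` X \<subseteq> {u,v}" using xforest_lab_in_verts[OF F] by blast
  moreover have "inj_on (lab C) X" using B unfolding binary_xtree_def by simp
  ultimately have "card X \<le> card {u,v}" by (metis card_inj_on_le finite.emptyI finite.insertI)
  moreover have "card {u,v} \<le> 2" by (simp add: card_insert_if)
  ultimately show False using X(1) by simp
qed

lemma binary_xtree_covers_contract:
  assumes B: "binary_xtree X C" and X: "3 \<le> card X" "finite X" and c: "covers X C F"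
  shows "\<exists>u v. {u,v} \<in> edges C \<and> u \<noteq> v \<and> iso X F (contract C u v)"
  using c binary_xtree_no_safe_del[OF B X] unfolding covers_def by blast

lemma binary_xtree_other_nbrs:
  assumes B: "binary_xtree X C" and c: "{v,c} \<in> edges C" and nl: "\<not> labeled X C v"
  shows "\<exists>\<alpha>1 \<alpha>2. {v,\<alpha>1} \<in> edges C \<and> {v,\<alpha>2} \<in> edges C \<and> \<alpha>1 \<noteq> \<alpha>2 \<and> \<alpha>1 \<noteq> c \<and> \<alpha>2 \<noteq> c"
proof -
  have F: "is_xforest X C" using binary_xtree_xforest[OF B] .
  have vV: "v \<in> verts C" using xforest_edge_vertex[OF F c] by simp
  have d: "deg (edges C) v = 3" using binary_xtree_vertex_cases[OF B vV] nl by auto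
  define S where "S = {e\<in>edges C. v \<in> e}"
  have fS: "finite S" using xforest_finite_edges[OF F] S_def by simp
  have cS: "card S = 3" using d S_def deg_def by simp
  have "card (S - {{v,c}}) = 2" using cS c S_def by (simp add: card_Diff_singleton)
  then obtain e1 e2 where e: "S - {{v,c}} = {e1,e2}" "e1 \<noteq> e2" by (auto simp: card_2_iff)
  have e1: "e1 \<in> edges C" "v \<in> e1" "e1 \<noteq> {v,c}"
    and e2: "e2 \<in> edges C" "v \<in> e2" "e2 \<noteq> {v,c}"
    using e(1) S_def by blast+
  obtain p1 q1 where pq1: "e1 = {p1,q1}" "p1 \<noteq> q1" using xforest_simple_edges[OF F] e1(1)
    unfolding simple_edges_def by blast
  obtain p2 q2 where pq2: "e2 = {p2,q2}" "p2 \<noteq> q2" using xforest_simple_edges[OF F] e2(1)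
    unfolding simple_edges_def by blast
  obtain \<alpha>1 where a1: "e1 = {v,\<alpha>1}" using pq1 e1(2) by (auto simp: insert_commute)
  obtain \<alpha>2 where a2: "e2 = {v,\<alpha>2}" using pq2 e2(2) by (auto simp: insert_commute)
  show ?thesis using a1 a2 e1 e2 e(2) by (rule_tac x=\<alpha>1 in exI, rule_tac x=\<alpha>2 in exI) auto
qed

lemma contract_nni_move:
  assumes ub: "{u,b} \<in> edges C" and vc: "{v,c} \<in> edges C"
    and d: "b \<noteq> u" "b \<noteq> v" "c \<noteq> u" "c \<noteq> v" "u \<noteq> v"
  shows "contract (nni_move C u v b c) u v = contract C u v"
proof -
  define E where "E = edges C"
  define R where "R = E - {{u,v}} - {{u,b},{v,c}}"
  have n1: "{u,b} \<noteq> {u,v}" "{v,c} \<noteq> {u,v}" "{u,c} \<noteq> {u,v}" "{v,b} \<noteq> {u,v}"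
    using d by (auto simp: doubleton_eq_iff)
  have A: "edges (nni_move C u v b c) - {{u,v}} = R \<union> {{u,c},{v,b}}"
    unfolding nni_move_def R_def E_def using n1 by auto
  have B: "E - {{u,v}} = R \<union> {{u,b},{v,c}}" unfolding R_def using ub vc n1 E_def by auto
  have g: "merge u v ` {u,c} = {u,c}" "merge u v ` {v,b} = {u,b}" "merge u v ` {u,b} = {u,b}" "merge u v ` {v,c} = {u,c}"
    using d unfolding merge_def by auto
  have "contract_edges (edges (nni_move C u v b c)) u v = contract_edges (edges C) u v"
    unfolding contract_edges_def A B[unfolded E_def] image_Un using g by auto
  moreover have "verts (nni_move C u v b c) = verts C" "lab (nni_move C u v b c) = lab C"
    unfolding nni_move_def by auto
  ultimately show ?thesis unfolding contract_def contract_edges_def merge_def Let_def by simp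
qed

lemma nni_move_props:
  assumes F: "is_xforest X C" and uv: "{u,v} \<in> edges C" "u \<noteq> v"
    and ub: "{u,b} \<in> edges C" and vc: "{v,c} \<in> edges C"
      and d: "b \<noteq> u" "b \<noteq> v" "c \<noteq> u" "c \<noteq> v"
  shows "simple_edges (edges (nni_move C u v b c))" "{u,v} \<in> edges (nni_move C u v b c)"
    "no_common_nbr (edges (nni_move C u v b c)) u v"
proof -
  have ef: "simple_edges (edges C)" using xforest_simple_edges[OF F] .
  have tf: "no_common_nbr (edges C) u v" using xforest_no_common_nbr[OF F uv] .
  have bc: "b \<noteq> c" using tf ub vc unfolding no_common_nbr_def by blast
  have EN: "edges (nni_move C u v b c) = (edges C - {{u,b},{v,c}}) \<union> {{u,c},{v,b}}"
    unfolding nni_move_def by simp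
  show "simple_edges (edges (nni_move C u v b c))" using ef d unfolding EN simple_edges_def by blast
  show "{u,v} \<in> edges (nni_move C u v b c)" using uv d unfolding EN by (auto simp: doubleton_eq_iff)
  show "no_common_nbr (edges (nni_move C u v b c)) u v"
    unfolding no_common_nbr_def
  proof
    assume "\<exists>z. {u,z} \<in> edges (nni_move C u v b c) \<and> {v,z} \<in> edges (nni_move C u v b c)"
    then obtain z where z: "{u,z} \<in> edges (nni_move C u v b c)" "{v,z} \<in> edges (nni_move C u v b c)"
      by blast
    have zu: "({u,z} \<in> edges C \<and> z \<noteq> b) \<or> z = c"
      using z(1) d uv(2) unfolding EN by (auto simp: doubleton_eq_iff)
    have zv: "({v,z} \<in> edges C \<and> z \<noteq> c) \<or> z = b"
      using z(2) d uv(2) unfolding EN by (auto simp: doubleton_eq_iff)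
    show False using zu zv tf bc unfolding no_common_nbr_def by blast
  qed
qed

section \<open>Covers of the contraction at a critical leaf\<close>

text \<open>C' plays the role of C_j, and of C_k once a and b are exchanged.\<close>
locale critical_configuration =
  fixes X :: "nat set" and Ci C' :: xforest
    and x w a b \<alpha>1 \<alpha>2 \<beta>1 \<beta>2 a1 a2 b1 b2 :: nat
  assumes binary_Ci: "binary_xtree X Ci" and binary_C': "binary_xtree X C'"
    and finX: "finite X" and cardX: "3 \<le> card X"
    and inX: "x \<in> X" "a1 \<in> X" "a2 \<in> X" "b1 \<in> X" "b2 \<in> X"
    and edges_Ci: "{lab Ci x, w} \<in> edges Ci" "{w,a} \<in> edges Ci" "{w,b} \<in> edges Ci"
      "{a,\<alpha>1} \<in> edges Ci" "{a,\<alpha>2} \<in> edges Ci" "{b,\<beta>1} \<in> edges Ci" "{b,\<beta>2} \<in> edges Ci"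
    and neqs: "w \<noteq> lab Ci x" "a \<noteq> b" "a \<noteq> w" "b \<noteq> w" "a \<noteq> lab Ci x" "b \<noteq> lab Ci x"
      "\<alpha>1 \<noteq> \<alpha>2" "\<alpha>1 \<noteq> w" "\<alpha>2 \<noteq> w" "\<beta>1 \<noteq> \<beta>2" "\<beta>1 \<noteq> w" "\<beta>2 \<noteq> w"
    and unlabeled: "\<not> labeled X Ci w" "\<not> labeled X Ci a" "\<not> labeled X Ci b"
    and leaf_a: "conn {e\<in>edges Ci. w \<notin> e \<and> a \<notin> e \<and> b \<notin> e} \<alpha>1 (lab Ci a1)"
      "conn {e\<in>edges Ci. w \<notin> e \<and> a \<notin> e \<and> b \<notin> e} \<alpha>2 (lab Ci a2)"
    and leaf_b: "conn {e\<in>edges Ci. w \<notin> e \<and> a \<notin> e \<and> b \<notin> e} \<beta>1 (lab Ci b1)"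
      "conn {e\<in>edges Ci. w \<notin> e \<and> a \<notin> e \<and> b \<notin> e} \<beta>2 (lab Ci b2)"
    and not_iso: "\<not> iso X C' Ci"
    and covers_contract: "covers X C' (contract Ci w a)"
begin

abbreviation "lx \<equiv> lab Ci x"
abbreviation "E \<equiv> edges Ci"
abbreviation "E' \<equiv> edges C'"
abbreviation "H \<equiv> {e\<in>edges Ci. w \<notin> e \<and> a \<notin> e \<and> b \<notin> e}"

lemma xforest_Ci: "is_xforest X Ci" using binary_xtree_xforest[OF binary_Ci] .

lemma xforest_C': "is_xforest X C'" using binary_xtree_xforest[OF binary_C'] .

lemma simple_Ci: "simple_edges E" using xforest_simple_edges[OF xforest_Ci] .

lemma simple_C': "simple_edges E'" using xforest_simple_edges[OF xforest_C'] .

lemma lab_Ci_neq: "z \<in> X \<Longrightarrow> lab Ci z \<noteq> w \<and> lab Ci z \<noteq> a \<and> lab Ci z \<noteq> b"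
  using unlabeled unfolding labeled_def by auto

lemma no_triangle:
  assumes "{c,y} \<in> E" "{c,w} \<in> E" "{w,t} \<in> E" "c \<noteq> w" "t \<noteq> c"
  shows "y \<noteq> t"
proof
  assume "y = t"
  then have "{c,t} \<in> E" using assms(1) by simp
  moreover have "no_common_nbr E w c" using xforest_no_common_nbr[OF xforest_Ci, of w c] assms(2,4)
    by (simp add: insert_commute)
  ultimately show False using assms(3) unfolding no_common_nbr_def by (metis insert_commute)
qed

lemma nbr_neq_lx:
  assumes "{c,y} \<in> E" "c \<noteq> w"
  shows "y \<noteq> lx"
proof
  assume "y = lx"
  moreover have "labeled X Ci lx" using inX(1) unfolding labeled_def by blast
  ultimately have "{c,lx} = {lx,w}"
    using binary_xtree_leaf_edge_unique[OF binary_Ci _ _ edges_Ci(1)] assms(1) by blast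
  then show False using assms(2) by (auto simp: doubleton_eq_iff)
qed

lemma \<alpha>_neqs: "\<alpha>1 \<noteq> a" "\<alpha>2 \<noteq> a" "\<alpha>1 \<noteq> b" "\<alpha>2 \<noteq> b" "\<alpha>1 \<noteq> lx" "\<alpha>2 \<noteq> lx"
  using simple_edges_neq[OF simple_Ci edges_Ci(4)] simple_edges_neq[OF simple_Ci edges_Ci(5)]
    no_triangle[OF edges_Ci(4) _ edges_Ci(3)] no_triangle[OF edges_Ci(5) _ edges_Ci(3)] nbr_neq_lx[OF edges_Ci(4)] nbr_neq_lx[OF edges_Ci(5)] edges_Ci(2) neqs
  by (auto simp: insert_commute)

lemma \<beta>_neqs: "\<beta>1 \<noteq> b" "\<beta>2 \<noteq> b" "\<beta>1 \<noteq> a" "\<beta>2 \<noteq> a" "\<beta>1 \<noteq> lx" "\<beta>2 \<noteq> lx"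
  using simple_edges_neq[OF simple_Ci edges_Ci(6)] simple_edges_neq[OF simple_Ci edges_Ci(7)]
    no_triangle[OF edges_Ci(6) _ edges_Ci(2)] no_triangle[OF edges_Ci(7) _ edges_Ci(2)] nbr_neq_lx[OF edges_Ci(6)] nbr_neq_lx[OF edges_Ci(7)] edges_Ci(3) neqs
  by (auto simp: insert_commute)

lemma edges_at_w: "e \<in> E \<Longrightarrow> w \<in> e \<Longrightarrow> e = {lx,w} \<or> e = {w,a} \<or> e = {w,b}"
  by (rule binary_xtree_edges_at[OF binary_Ci edges_Ci(1,2,3)]) (use neqs in \<open>auto simp: doubleton_eq_iff\<close>)

lemma edges_at_a: "e \<in> E \<Longrightarrow> a \<in> e \<Longrightarrow> e = {w,a} \<or> e = {a,\<alpha>1} \<or> e = {a,\<alpha>2}"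
  by (rule binary_xtree_edges_at[OF binary_Ci edges_Ci(2,4,5)]) (use neqs \<alpha>_neqs in \<open>auto simp: doubleton_eq_iff\<close>)

lemma xforest_contract_wa: "is_xforest X (contract Ci w a)" using covers_contract
  unfolding covers_def by simp

lemma conn_H_imp: "conn H s t \<Longrightarrow> conn (E - {{w,b}}) s t"
  by (erule conn_mono) auto

lemma separates_wb:
  assumes a': "a' = a1 \<or> a' = a2"
  shows "separates E {w,b} lx (lab Ci a') (lab Ci b1) (lab Ci b2)"
proof -
  define G where "G = E - {{w,b}}"
  have g1: "{lx,w} \<in> G" "{w,a} \<in> G" "{a,\<alpha>1} \<in> G" "{a,\<alpha>2} \<in> G" "{b,\<beta>1} \<in> G" "{b,\<beta>2} \<in> G"
    using edges_Ci neqs \<alpha>_neqs \<beta>_neqs unfolding G_def by (auto simp: doubleton_eq_iff)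
  have la: "conn G a (lab Ci a')"
  proof -
    have "conn G a \<alpha>1" "conn G a \<alpha>2" using conn_edge g1 by auto
    moreover have "conn G \<alpha>1 (lab Ci a1)" "conn G \<alpha>2 (lab Ci a2)"
      using conn_H_imp[OF leaf_a(1)] conn_H_imp[OF leaf_a(2)] G_def by auto
    ultimately show ?thesis using a' conn_trans by blast
  qed
  have c1: "conn G lx (lab Ci a')"
    using conn_trans[OF conn_trans[OF conn_edge[OF g1(1)] conn_edge[OF g1(2)]] la] .
  have hb: "conn G \<beta>1 (lab Ci b1)" "conn G \<beta>2 (lab Ci b2)"
    using conn_H_imp[OF leaf_b(1)] conn_H_imp[OF leaf_b(2)] G_def by auto
  have lb1: "conn G b (lab Ci b1)" using conn_trans[OF conn_edge[OF g1(5)] hb(1)] .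
  have lb2: "conn G b (lab Ci b2)" using conn_trans[OF conn_edge[OF g1(6)] hb(2)] .
  have c2: "conn G (lab Ci b1) (lab Ci b2)" using conn_trans[OF conn_sym[OF lb1] lb2] .
  have c3: "\<not> conn G lx (lab Ci b1)"
  proof
    assume "conn G lx (lab Ci b1)"
    then have "conn G w b"
      using conn_trans[OF conn_trans[OF conn_sym[OF conn_edge[OF g1(1)]]] conn_sym[OF lb1]] by blast
    then show False using xforest_acyclic[OF xforest_Ci edges_Ci(3)] G_def by simp
  qed
  show ?thesis unfolding separates_def using edges_Ci(3) c1 c2 c3 G_def by simp
qed

end

text \<open>Here f is an isomorphism between the contraction of wa in C_i and that of some edge uv of C';
the contractions keep w resp. u.\<close>
locale critical_cover = critical_configuration +
  fixes u v :: nat and f :: "nat \<Rightarrow> nat"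
  assumes uv_edge: "{u,v} \<in> edges C'" and uv_neq: "u \<noteq> v"
   and f_bij: "bij_betw f (verts Ci - {a}) (verts C' - {v})"
   and f_edges: "contract_edges (edges C') u v = (\<lambda>e. f ` e) ` contract_edges (edges Ci) w a"
   and f_lab: "\<forall>z\<in>X. merge u v (lab C' z) = f (merge w a (lab Ci z))"
begin

lemma f_inj: "inj_on f (verts Ci - {a})" using f_bij bij_betw_def by blast

lemma f_into: "z \<in> verts Ci - {a} \<Longrightarrow> f z \<in> verts C' \<and> f z \<noteq> v"
  using f_bij bij_betwE by blast

lemma verts_Ci_minus_a: "w \<in> verts Ci - {a}" "lx \<in> verts Ci - {a}" "b \<in> verts Ci - {a}"
  "\<alpha>1 \<in> verts Ci - {a}" "\<alpha>2 \<in> verts Ci - {a}"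
  using xforest_edge_vertex[OF xforest_Ci edges_Ci(1)] xforest_edge_vertex[OF xforest_Ci edges_Ci(3)] xforest_edge_vertex[OF xforest_Ci edges_Ci(4)] xforest_edge_vertex[OF xforest_Ci edges_Ci(5)]
    neqs \<alpha>_neqs by auto

lemma f_eq_iff: "y \<in> verts Ci - {a} \<Longrightarrow> z \<in> verts Ci - {a} \<Longrightarrow> f y = f z \<longleftrightarrow> y = z"
  using f_inj inj_on_eq_iff by metis

lemma contract_edges_at_w: "{w,y} \<in> contract_edges E w a" if yy: "y \<in> {lx,b,\<alpha>1,\<alpha>2}"
proof -
  have c: "merge w a ` {lx,w} = {w,lx}" "merge w a ` {w,b} = {w,b}" "merge w a ` {a,\<alpha>1} = {w,\<alpha>1}" "merge w a ` {a,\<alpha>2} = {w,\<alpha>2}"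
    using neqs \<alpha>_neqs unfolding merge_def by auto
  have n: "{lx,w} \<noteq> {w,a}" "{w,b} \<noteq> {w,a}" "{a,\<alpha>1} \<noteq> {w,a}" "{a,\<alpha>2} \<noteq> {w,a}"
    using neqs \<alpha>_neqs by (auto simp: doubleton_eq_iff)
  have "\<exists>e0. e0 \<in> E - {{w,a}} \<and> merge w a ` e0 = {w,y}"
  proof -
    consider "y = lx" | "y = b" | "y = \<alpha>1" | "y = \<alpha>2" using yy by blast
    then show ?thesis
    proof cases
      case 1 then show ?thesis using c(1) n(1) edges_Ci(1) by blast
    next
      case 2 then show ?thesis using c(2) n(2) edges_Ci(3) by blast
    next
      case 3 then show ?thesis using c(3) n(3) edges_Ci(4) by blast
    next
      case 4 then show ?thesis using c(4) n(4) edges_Ci(5) by blast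
    qed
  qed
  then show ?thesis unfolding contract_edges_def by (metis image_eqI)
qed

lemma f_contract_edges_at_w: "{f w, f y} \<in> contract_edges E' u v" if "y \<in> {lx,b,\<alpha>1,\<alpha>2}"
proof -
  have "f ` {w,y} \<in> (\<lambda>e. f ` e) ` contract_edges E w a"
    using contract_edges_at_w[OF that] by (rule imageI)
  then show ?thesis using f_edges by simp
qed

lemma nbr_w_in_verts: "y \<in> {lx,b,\<alpha>1,\<alpha>2} \<Longrightarrow> y \<in> verts Ci - {a} \<and> y \<noteq> w"
  using verts_Ci_minus_a neqs \<alpha>_neqs by auto

lemma nbrs_w_distinct: "lx \<noteq> b" "lx \<noteq> \<alpha>1" "lx \<noteq> \<alpha>2" "b \<noteq> \<alpha>1" "b \<noteq> \<alpha>2" "\<alpha>1 \<noteq> \<alpha>2"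
  using neqs \<alpha>_neqs by auto

lemma edge_at_f_w:
  assumes "f w \<noteq> u" and y: "y \<in> {lx,b,\<alpha>1,\<alpha>2}"
  shows "\<exists>t. {f w, t} \<in> E' \<and> (t = f y \<or> (t = v \<and> f y = u))"
proof -
  obtain s' t' where st: "{s',t'} \<in> E'" "merge u v s' = f w" "merge u v t' = f y"
    using contract_edges_preimage[OF f_contract_edges_at_w[OF y] simple_C'] by blast
  have s': "s' = f w" using merge_eq_other[OF assms(1) st(2)] .
  show ?thesis
  proof (cases "f y = u")
    case True
    then have "t' = u \<or> t' = v" using merge_eq_target st(3) by simp
    then show ?thesis using st(1) s' True by blast
  next
    case False
    then have "t' = f y" using merge_eq_other[OF _ st(3)] by simp
    then show ?thesis using st(1) s' by blast
  qed
qed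

text \<open>In the contraction of C_i the merged vertex w has the four neighbours lx, b, \<alpha>1, \<alpha>2,
so its image under f must be the merged vertex u: any other vertex of the binary tree C'
has at most three.\<close>
lemma f_w: "f w = u"
proof (rule ccontr)
  assume Wu: "f w \<noteq> u"
  have targets_neq: "t1 \<noteq> t2" if "y1 \<in> {lx,b,\<alpha>1,\<alpha>2}" "y2 \<in> {lx,b,\<alpha>1,\<alpha>2}" "y1 \<noteq> y2"
    "t1 = f y1 \<or> (t1 = v \<and> f y1 = u)" "t2 = f y2 \<or> (t2 = v \<and> f y2 = u)" for y1 y2 t1 t2
  proof -
    have v1: "y1 \<in> verts Ci - {a}" and v2: "y2 \<in> verts Ci - {a}"
      using nbr_w_in_verts that(1,2) by auto
    have i: "f y1 \<noteq> f y2" using f_eq_iff[OF v1 v2] that(3) by simp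
    have n1: "f y1 \<noteq> v" and n2: "f y2 \<noteq> v" using f_into[OF v1] f_into[OF v2] by auto
    show ?thesis using that(4) that(5) i n1 n2 by (elim disjE conjE) simp_all
  qed
  have Y: "lx \<in> {lx,b,\<alpha>1,\<alpha>2}" "b \<in> {lx,b,\<alpha>1,\<alpha>2}" "\<alpha>1 \<in> {lx,b,\<alpha>1,\<alpha>2}" "\<alpha>2 \<in> {lx,b,\<alpha>1,\<alpha>2}"
    by auto
  obtain t1 t2 t3 t4 where t1: "{f w,t1} \<in> E'" "t1 = f lx \<or> (t1 = v \<and> f lx = u)"
    and t2: "{f w,t2} \<in> E'" "t2 = f b \<or> (t2 = v \<and> f b = u)"
    and t3: "{f w,t3} \<in> E'" "t3 = f \<alpha>1 \<or> (t3 = v \<and> f \<alpha>1 = u)"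
    and t4: "{f w,t4} \<in> E'" "t4 = f \<alpha>2 \<or> (t4 = v \<and> f \<alpha>2 = u)"
    using edge_at_f_w[OF Wu Y(1)] edge_at_f_w[OF Wu Y(2)] edge_at_f_w[OF Wu Y(3)] edge_at_f_w[OF Wu Y(4)]
    by blast
  note D = nbrs_w_distinct
  have "t1 \<noteq> t2" "t1 \<noteq> t3" "t1 \<noteq> t4" "t2 \<noteq> t3" "t2 \<noteq> t4" "t3 \<noteq> t4"
    using targets_neq[OF Y(1) Y(2) D(1) t1(2) t2(2)] targets_neq[OF Y(1) Y(3) D(2) t1(2) t3(2)] targets_neq[OF Y(1) Y(4) D(3) t1(2) t4(2)]
      targets_neq[OF Y(2) Y(3) D(4) t2(2) t3(2)] targets_neq[OF Y(2) Y(4) D(5) t2(2) t4(2)] targets_neq[OF Y(3) Y(4) D(6) t3(2) t4(2)]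
    by auto
  then show False
    using binary_xtree_no_four_edges[OF binary_C' t1(1) t2(1) t3(1) t4(1)]
      by (auto simp: doubleton_eq_iff)
qed

lemma f_avoids_uv: "z \<in> verts Ci \<Longrightarrow> z \<noteq> w \<Longrightarrow> z \<noteq> a \<Longrightarrow> f z \<noteq> u \<and> f z \<noteq> v"
  using f_w f_eq_iff[of z w] f_into[of z] verts_Ci_minus_a(1) by auto

lemma f_nbr_edge: "{u, f y} \<in> E' \<or> {v, f y} \<in> E'" if y: "y \<in> {lx,b,\<alpha>1,\<alpha>2}"
proof -
  obtain s' t' where st: "{s',t'} \<in> E'" "merge u v s' = u" "merge u v t' = f y"
    using contract_edges_preimage[OF f_contract_edges_at_w[OF y] simple_C'] f_w by blast
  have "f y \<noteq> u" using f_avoids_uv nbr_w_in_verts[OF y] by blast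
  then have "t' = f y" using merge_eq_other[OF _ st(3)] by simp
  moreover have "s' = u \<or> s' = v" using merge_eq_target[OF st(2)] .
  ultimately show ?thesis using st(1) by blast
qed

lemma f_nbr_neq: "y \<in> {lx,b,\<alpha>1,\<alpha>2} \<Longrightarrow> f y \<noteq> u \<and> f y \<noteq> v"
  using f_avoids_uv nbr_w_in_verts by blast

lemma f_nbr_not_both: "y \<in> {lx,b,\<alpha>1,\<alpha>2} \<Longrightarrow> \<not> ({u, f y} \<in> E' \<and> {v, f y} \<in> E')"
  using xforest_no_common_nbr[OF xforest_C' uv_edge uv_neq] unfolding no_common_nbr_def by blast

lemma at_most_two_f_nbrs:
  assumes "p = u \<or> p = v" "y1 \<in> {lx,b,\<alpha>1,\<alpha>2}" "y2 \<in> {lx,b,\<alpha>1,\<alpha>2}" "y3 \<in> {lx,b,\<alpha>1,\<alpha>2}"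
    "y1 \<noteq> y2" "y1 \<noteq> y3" "y2 \<noteq> y3"
    "{p, f y1} \<in> E'" "{p, f y2} \<in> E'" "{p, f y3} \<in> E'"
  shows False
proof -
  have ne: "f y1 \<noteq> f y2" "f y1 \<noteq> f y3" "f y2 \<noteq> f y3"
    using assms(5-7) f_eq_iff nbr_w_in_verts assms(2-4) by meson+
  have n: "f yi \<noteq> u \<and> f yi \<noteq> v" if "yi \<in> {lx,b,\<alpha>1,\<alpha>2}" for yi
    using f_nbr_neq[OF that] .
  have e0: "{u,v} \<in> E'" using uv_edge .
  show False
    using binary_xtree_no_four_edges[OF binary_C' e0 assms(8) assms(9) assms(10), of p] assms(1) ne n[OF assms(2)] n[OF assms(3)] n[OF assms(4)]
    by (auto simp: doubleton_eq_iff)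
qed

lemma f_nbrs_split_at:
  assumes pq: "(p = u \<and> q = v) \<or> (p = v \<and> q = u)" and pl: "{p, f lx} \<in> E'"
  shows "({p,f b} \<in> E' \<and> {q, f \<alpha>1} \<in> E' \<and> {q, f \<alpha>2} \<in> E') \<or>
    ({p,f \<alpha>1} \<in> E' \<and> {q, f b} \<in> E' \<and> {q, f \<alpha>2} \<in> E') \<or>
    ({p,f \<alpha>2} \<in> E' \<and> {q, f b} \<in> E' \<and> {q, f \<alpha>1} \<in> E')"
proof -
  have Y: "lx \<in> {lx,b,\<alpha>1,\<alpha>2}" "b \<in> {lx,b,\<alpha>1,\<alpha>2}" "\<alpha>1 \<in> {lx,b,\<alpha>1,\<alpha>2}" "\<alpha>2 \<in> {lx,b,\<alpha>1,\<alpha>2}"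
    by auto
  have o: "{p, f y} \<in> E' \<or> {q, f y} \<in> E'" if "y \<in> {lx,b,\<alpha>1,\<alpha>2}" for y
    using f_nbr_edge[OF that] pq by blast
  have nb: "\<not> ({p, f y} \<in> E' \<and> {q, f y} \<in> E')" if "y \<in> {lx,b,\<alpha>1,\<alpha>2}" for y
    using f_nbr_not_both[OF that] pq by blast
  have p': "p = u \<or> p = v" and q': "q = u \<or> q = v" using pq by auto
  note D = nbrs_w_distinct
  have a1: "\<not> ({p, f b} \<in> E' \<and> {p, f \<alpha>1} \<in> E')"
    using at_most_two_f_nbrs[OF p' Y(1) Y(2) Y(3) D(1) D(2) D(4) pl] by blast
  have a2: "\<not> ({p, f b} \<in> E' \<and> {p, f \<alpha>2} \<in> E')"
    using at_most_two_f_nbrs[OF p' Y(1) Y(2) Y(4) D(1) D(3) D(5) pl] by blast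
  have a3: "\<not> ({p, f \<alpha>1} \<in> E' \<and> {p, f \<alpha>2} \<in> E')"
    using at_most_two_f_nbrs[OF p' Y(1) Y(3) Y(4) D(2) D(3) D(6) pl] by blast
  have a4: "\<not> ({q, f b} \<in> E' \<and> {q, f \<alpha>1} \<in> E' \<and> {q, f \<alpha>2} \<in> E')"
    using at_most_two_f_nbrs[OF q' Y(2) Y(3) Y(4) D(4) D(5) D(6)] by blast
  show ?thesis
    using o[OF Y(2)] o[OF Y(3)] o[OF Y(4)] a1 a2 a3 a4 nb[OF Y(2)] nb[OF Y(3)] nb[OF Y(4)] by blast
qed

lemma f_nbrs_split:
  obtains p q where "(p = u \<and> q = v) \<or> (p = v \<and> q = u)" "{p, f lx} \<in> E'"
   "({p,f b} \<in> E' \<and> {q, f \<alpha>1} \<in> E' \<and> {q, f \<alpha>2} \<in> E') \<or>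
    ({p,f \<alpha>1} \<in> E' \<and> {q, f b} \<in> E' \<and> {q, f \<alpha>2} \<in> E') \<or>
    ({p,f \<alpha>2} \<in> E' \<and> {q, f b} \<in> E' \<and> {q, f \<alpha>1} \<in> E')"
proof -
  have "lx \<in> {lx,b,\<alpha>1,\<alpha>2}" by simp
  from f_nbr_edge[OF this] show ?thesis
  proof
    assume "{u, f lx} \<in> E'" then show ?thesis using that f_nbrs_split_at[of u v] by blast
  next
    assume "{v, f lx} \<in> E'" then show ?thesis using that f_nbrs_split_at[of v u] by blast
  qed
qed

lemma f_far_edge:
  assumes e: "e \<in> E" "w \<notin> e" "a \<notin> e"
  shows "f ` e \<in> E' \<and> u \<notin> f ` e \<and> v \<notin> f ` e"
proof -
  have eV: "e \<subseteq> verts Ci - {a}" using xforest_edge_subset[OF xforest_Ci e(1)] e(3) by auto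
  have ce: "merge w a ` e = e" using e(3) unfolding merge_def by (auto simp: image_iff)
  have "e \<noteq> {w,a}" using e(2) by auto
  then have "e \<in> contract_edges E w a" using e(1) ce unfolding contract_edges_def
    by (metis DiffI image_eqI singletonD)
  then have fe1: "f ` e \<in> contract_edges E' u v" using f_edges by auto
  have nu: "u \<notin> f ` e"
  proof
    assume "u \<in> f ` e"
    then obtain z where "z \<in> e" "f z = u" by auto
    then show False using f_w f_eq_iff[of z w] eV verts_Ci_minus_a(1) e(2) by auto
  qed
  have nv: "v \<notin> f ` e" using f_into eV by blast
  obtain e'' where e'': "e'' \<in> E' - {{u,v}}" "f ` e = merge u v ` e''" using fe1
    unfolding contract_edges_def by (rule imageE)
  then have e': "e'' \<in> E'" "e'' \<noteq> {u,v}" "merge u v ` e'' = f ` e" by auto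
  define e' where "e' = e''"
  note e' = e'[folded e'_def]
  have im: "merge u v z \<in> f ` e" if "z \<in> e'" for z using e'(3) that by blast
  have "merge u v u = u" "merge u v v = u" using uv_neq unfolding merge_def by auto
  then have "u \<notin> e'" "v \<notin> e'" using im nu by metis+
  then have "merge u v ` e' = e'" unfolding merge_def by (auto simp: image_iff)
  then show ?thesis using e' nu nv by simp
qed

lemma far_edge_preimage:
  assumes e': "e' \<in> E'" "u \<notin> e'" "v \<notin> e'"
  shows "\<exists>e0\<in>E. w \<notin> e0 \<and> a \<notin> e0 \<and> e' = f ` e0"
proof -
  have ce: "merge u v ` e' = e'" using e'(2,3) unfolding merge_def by (auto simp: image_iff)
  have "e' \<noteq> {u,v}" using e'(2) by auto
  then have "e' \<in> contract_edges E' u v"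
    using e'(1) ce unfolding contract_edges_def by (metis DiffI image_eqI singletonD)
  then have "e' \<in> (\<lambda>e. f ` e) ` contract_edges E w a" using f_edges by simp
  then obtain \<epsilon> where eps: "\<epsilon> \<in> contract_edges E w a" "e' = f ` \<epsilon>"
    by blast
  then obtain e0 where e0: "e0 \<in> E - {{w,a}}" "\<epsilon> = merge w a ` e0"
    unfolding contract_edges_def by blast
  have "w \<notin> \<epsilon>" using eps(2) e'(2) f_w by auto
  then have nwa: "w \<notin> e0" "a \<notin> e0" using e0(2) unfolding merge_def
    by (auto simp: image_iff)
  then have "merge w a ` e0 = e0" unfolding merge_def by (auto simp: image_iff)
  then show ?thesis using eps e0 nwa by auto
qed

lemma conn_far_f: "conn {e\<in>E. w \<notin> e \<and> a \<notin> e} s t \<Longrightarrow> conn (E' - {{u,v}}) (f s) (f t)"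
proof (erule conn_map)
  fix y z assume "adj {e\<in>E. w \<notin> e \<and> a \<notin> e} y z"
  then have "{y,z} \<in> E" "w \<notin> {y,z}" "a \<notin> {y,z}" unfolding adj_def by auto
  from f_far_edge[OF this] have "{f y, f z} \<in> E'" "u \<notin> {f y, f z}" by auto
  then show "adj (E' - {{u,v}}) (f y) (f z) \<or> f y = f z" unfolding adj_def by auto
qed

lemma conn_H_f: "conn H s t \<Longrightarrow> conn (E' - {{u,v}}) (f s) (f t)"
  by (rule conn_far_f, erule conn_mono) auto

lemma edges_at_centre:
  assumes pq: "(p = u \<and> q = v) \<or> (p = v \<and> q = u)" and e1: "{p, f y1} \<in> E'"
    and e2: "{p, f y2} \<in> E'"
    and y: "y1 \<in> {lx,b,\<alpha>1,\<alpha>2}" "y2 \<in> {lx,b,\<alpha>1,\<alpha>2}" "y1 \<noteq> y2"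
  shows "\<not> labeled X C' p" "\<And>e. e \<in> E' \<Longrightarrow> p \<in> e \<Longrightarrow> e = {p,q} \<or> e = {p, f y1} \<or> e = {p, f y2}"
proof -
  have pqE: "{p,q} \<in> E'" using uv_edge pq by (auto simp: insert_commute)
  have n1: "f y1 \<noteq> u \<and> f y1 \<noteq> v" and n2: "f y2 \<noteq> u \<and> f y2 \<noteq> v"
    using f_nbr_neq y by auto
  have ne: "f y1 \<noteq> f y2" using f_eq_iff nbr_w_in_verts y by meson
  have d: "{p,q} \<noteq> {p, f y1}" "{p,q} \<noteq> {p, f y2}" "{p, f y1} \<noteq> {p, f y2}"
    using pq n1 n2 ne by (auto simp: doubleton_eq_iff)
  show "\<not> labeled X C' p" using binary_xtree_two_edges(1)[OF binary_C' e1 e2 d(3)] by simp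
  show "\<And>e. e \<in> E' \<Longrightarrow> p \<in> e \<Longrightarrow> e = {p,q} \<or> e = {p, f y1} \<or> e = {p, f y2}"
    by (rule binary_xtree_edges_at[OF binary_C' pqE e1 e2 d]) auto
qed

lemma lab_C'_eq: "z \<in> X \<Longrightarrow> \<not> labeled X C' v \<Longrightarrow> lab C' z = f (lab Ci z)"
  using f_lab lab_Ci_neq merge_other unfolding labeled_def by (metis image_eqI)

end

text \<open>If C' splits the merged vertex the same way as C_i, extending f by w \<mapsto> p and a \<mapsto> q
undoes the contraction and yields an isomorphism C_i \<cong> C'.\<close>
locale restoring_split = critical_cover +
  fixes p q :: nat
  assumes pq: "(p = u \<and> q = v) \<or> (p = v \<and> q = u)"
    and edges_p: "{p, f lx} \<in> E'" "{p, f b} \<in> E'"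
    and edges_q: "{q, f \<alpha>1} \<in> E'" "{q, f \<alpha>2} \<in> E'"
begin

definition h :: "nat \<Rightarrow> nat" where
  "h z = (if z = w then p else if z = a then q else f z)"

lemma h_simps: "h w = p" "h a = q" "z \<noteq> w \<Longrightarrow> z \<noteq> a \<Longrightarrow> h z = f z"
  using neqs unfolding h_def by auto

lemma edges_at_p: "\<not> labeled X C' p" "e \<in> E' \<Longrightarrow> p \<in> e \<Longrightarrow> e = {p,q} \<or> e = {p, f lx} \<or> e = {p, f b}"
proof -
  have "lx \<in> {lx,b,\<alpha>1,\<alpha>2}" "b \<in> {lx,b,\<alpha>1,\<alpha>2}" by auto
  note c = edges_at_centre[OF pq edges_p this nbrs_w_distinct(1)]
  show "\<not> labeled X C' p" by (rule c(1))
  show "e \<in> E' \<Longrightarrow> p \<in> e \<Longrightarrow> e = {p,q} \<or> e = {p, f lx} \<or> e = {p, f b}"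
    by (rule c(2))
qed

lemma edges_at_q: "\<not> labeled X C' q" "e \<in> E' \<Longrightarrow> q \<in> e \<Longrightarrow> e = {q,p} \<or> e = {q, f \<alpha>1} \<or> e = {q, f \<alpha>2}"
proof -
  have qp: "(q = u \<and> p = v) \<or> (q = v \<and> p = u)" using pq by auto
  have "\<alpha>1 \<in> {lx,b,\<alpha>1,\<alpha>2}" "\<alpha>2 \<in> {lx,b,\<alpha>1,\<alpha>2}" by auto
  note c = edges_at_centre[OF qp edges_q this nbrs_w_distinct(6)]
  show "\<not> labeled X C' q" by (rule c(1))
  show "e \<in> E' \<Longrightarrow> q \<in> e \<Longrightarrow> e = {q,p} \<or> e = {q, f \<alpha>1} \<or> e = {q, f \<alpha>2}"
    by (rule c(2))
qed

lemma pq_edge: "{p,q} \<in> E'"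
  using uv_edge pq by (auto simp: insert_commute)

lemma pq_verts: "p \<in> verts C'" "q \<in> verts C'"
  using xforest_edge_vertex[OF xforest_C' pq_edge] by auto

lemma h_inj: "inj_on h (verts Ci)"
proof (rule inj_onI)
  fix y z assume yz: "y \<in> verts Ci" "z \<in> verts Ci" "h y = h z"
  show "y = z"
  proof (cases "y \<in> {w,a}")
    case True
    then show ?thesis
    proof (cases "z \<in> {w,a}")
      case True
      then show ?thesis using \<open>y \<in> {w,a}\<close> yz(3) h_simps(1,2) pq uv_neq neqs by auto
    next
      case False
      have "h y = u \<or> h y = v" using \<open>y \<in> {w,a}\<close> h_simps(1,2) pq by auto
      moreover have "h z = f z" "f z \<noteq> u" "f z \<noteq> v"
        using False h_simps(3) f_avoids_uv[OF yz(2)] by auto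
      ultimately show ?thesis using yz(3) by auto
    qed
  next
    case False
    then show ?thesis
    proof (cases "z \<in> {w,a}")
      case True
      have "h z = u \<or> h z = v" using True h_simps(1,2) pq by auto
      moreover have "h y = f y" "f y \<noteq> u" "f y \<noteq> v"
        using \<open>y \<notin> {w,a}\<close> h_simps(3) f_avoids_uv[OF yz(1)] by auto
      ultimately show ?thesis using yz(3) by auto
    next
      case False
      then show ?thesis using \<open>y \<notin> {w,a}\<close> yz h_simps(3) f_eq_iff by auto
    qed
  qed
qed

lemma h_image: "h ` verts Ci = verts C'"
proof
  show "h ` verts Ci \<subseteq> verts C'"
  proof
    fix y assume "y \<in> h ` verts Ci"
    then obtain z where z: "z \<in> verts Ci" "y = h z" by auto
    show "y \<in> verts C'" using z h_simps(1,2) pq_verts h_simps(3) f_into[of z]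
      by (cases "z = w"; cases "z = a") auto
  qed
next
  show "verts C' \<subseteq> h ` verts Ci"
  proof
    fix y assume yV: "y \<in> verts C'"
    show "y \<in> h ` verts Ci"
    proof (cases "y = u \<or> y = v")
      case True
      then have "y = h w \<or> y = h a" using h_simps(1,2) pq by auto
      then show ?thesis using verts_Ci_minus_a(1) xforest_edge_vertex[OF xforest_Ci edges_Ci(2)] by auto
    next
      case False
      then have "y \<in> verts C' - {v}" using yV by auto
      then obtain z where z: "z \<in> verts Ci - {a}" "y = f z" using f_bij
        by (metis bij_betw_def imageE)
      have "z \<noteq> w" using z False f_w by auto
      then have "h z = y" using z h_simps(3) by auto
      moreover have "z \<in> verts Ci" using z by auto
      ultimately show ?thesis by (metis imageI)
    qed
  qed
qed

lemma h_bij: "bij_betw h (verts Ci) (verts C')"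
  using h_inj h_image by (simp add: bij_betw_def)

lemma h_image_edges_subset: "(\<lambda>e. h ` e) ` E \<subseteq> E'"
proof
  fix e' assume "e' \<in> (\<lambda>e. h ` e) ` E"
  then obtain e where e0: "e \<in> E" "e' = h ` e" by blast
  have hl: "h lx = f lx" "h b = f b" "h \<alpha>1 = f \<alpha>1" "h \<alpha>2 = f \<alpha>2"
    using h_simps(3) neqs \<alpha>_neqs by auto
  show "e' \<in> E'"
  proof (cases "w \<in> e")
    case True
    then have "e = {lx,w} \<or> e = {w,a} \<or> e = {w,b}" using edges_at_w e0(1) by blast
    moreover have "h ` {lx,w} = {p, f lx}" "h ` {w,a} = {p,q}" "h ` {w,b} = {p, f b}"
      using h_simps hl by auto
    ultimately show ?thesis using e0 edges_p pq_edge by (auto simp: insert_commute)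
  next
    case nw: False
    show ?thesis
    proof (cases "a \<in> e")
      case True
      then have "e = {w,a} \<or> e = {a,\<alpha>1} \<or> e = {a,\<alpha>2}" using edges_at_a e0(1)
        by blast
      moreover have "h ` {a,\<alpha>1} = {q, f \<alpha>1}" "h ` {w,a} = {p,q}" "h ` {a,\<alpha>2} = {q, f \<alpha>2}"
        using h_simps hl by auto
      ultimately show ?thesis using e0 edges_q pq_edge by auto
    next
      case False
      have "h ` e = f ` e" by (rule image_cong[OF refl]) (metis h_simps(3) nw False)
      then show ?thesis using f_far_edge[OF e0(1) nw False] e0(2) by simp
    qed
  qed
qed

lemma edges_subset_h_image: "E' \<subseteq> (\<lambda>e. h ` e) ` E"
proof
  fix e' assume e': "e' \<in> E'"
  have hl: "h lx = f lx" "h b = f b" "h \<alpha>1 = f \<alpha>1" "h \<alpha>2 = f \<alpha>2"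
    using h_simps(3) neqs \<alpha>_neqs by auto
  show "e' \<in> (\<lambda>e. h ` e) ` E"
  proof (cases "p \<in> e'")
    case True
    then have "e' = {p,q} \<or> e' = {p, f lx} \<or> e' = {p, f b}" using edges_at_p(2)[OF e'] by simp
    moreover have "{p,q} = h ` {w,a}" "{p, f lx} = h ` {lx,w}" "{p, f b} = h ` {w,b}"
      using h_simps hl by auto
    ultimately show ?thesis using edges_Ci by blast
  next
    case np: False
    show ?thesis
    proof (cases "q \<in> e'")
      case True
      then have "e' = {q,p} \<or> e' = {q, f \<alpha>1} \<or> e' = {q, f \<alpha>2}"
        using edges_at_q(2)[OF e'] by simp
      moreover have "{q,p} = h ` {w,a}" "{q, f \<alpha>1} = h ` {a,\<alpha>1}" "{q, f \<alpha>2} = h ` {a,\<alpha>2}"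
        using h_simps hl by auto
      ultimately show ?thesis using edges_Ci by blast
    next
      case False
      then obtain e0 where e0: "e0 \<in> E" "w \<notin> e0" "a \<notin> e0" "e' = f ` e0"
        using far_edge_preimage[OF e'] np pq by auto
      have "h ` e0 = f ` e0" by (rule image_cong[OF refl]) (metis h_simps(3) e0(2,3))
      then show ?thesis using e0 by (metis imageI)
    qed
  qed
qed

lemma h_edges: "edges C' = (\<lambda>e. h ` e) ` edges Ci"
  using h_image_edges_subset edges_subset_h_image by blast

lemma h_lab: "z \<in> X \<Longrightarrow> lab C' z = h (lab Ci z)"
  using lab_C'_eq edges_at_p(1) edges_at_q(1) pq h_simps(3) lab_Ci_neq by auto

lemma iso_Ci_C': "iso X Ci C'"
  unfolding iso_def using h_bij h_edges h_lab by blast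

end

context critical_cover
begin

lemma restoring_split_impossible:
  assumes "(p = u \<and> q = v) \<or> (p = v \<and> q = u)"
    and "{p, f lx} \<in> E'" "{p, f b} \<in> E'" "{q, f \<alpha>1} \<in> E'" "{q, f \<alpha>2} \<in> E'"
  shows False
proof -
  interpret restoring_split X Ci C' x w a b \<alpha>1 \<alpha>2 \<beta>1 \<beta>2 a1 a2 b1 b2 u v f p q
    by unfold_locales (use assms in auto)
  show False using iso_sym[OF xforest_Ci iso_Ci_C'] not_iso by blast
qed

text \<open>The quartet x a'|b1 b2 displayed by wb in C_i survives the contraction of wa, is carried
over by f, and lifts back to an edge of C' other than uv.\<close>
lemma separates_xa'_b1b2:
  assumes a': "a' = a1 \<or> a' = a2"
  shows "\<exists>e2. e2 \<noteq> {u,v} \<and> separates E' e2 (lab C' x) (lab C' a') (lab C' b1) (lab C' b2)"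
proof -
  have tw: "no_common_nbr E w a"
    using xforest_no_common_nbr[OF xforest_Ci edges_Ci(2) neqs(3)[symmetric]] .
  have ne: "{w,b} \<noteq> {w,a}" using neqs by (auto simp: doubleton_eq_iff)
  have aX: "a' \<in> X" using a' inX by auto
  note r1 = separates_contract_edges[OF simple_Ci edges_Ci(2) neqs(3)[symmetric] tw separates_wb[OF a'] ne]
  have lab_fixed: "merge w a (lab Ci z) = lab Ci z" if "z \<in> X" for z
    using lab_Ci_neq[OF that] merge_other by blast
  have inV: "lab Ci z \<in> verts Ci - {a}" if "z \<in> X" for z
    using lab_Ci_neq[OF that] xforest_lab_in_verts[OF xforest_Ci that] by blast
  have subj: "\<And>e. e \<in> contract_edges E w a \<Longrightarrow> e \<subseteq> verts Ci - {a}"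
    using xforest_edge_subset[OF xforest_contract_wa] unfolding contract_simps by blast
  have efj: "simple_edges (contract_edges E w a)" using xforest_simple_edges[OF xforest_contract_wa]
    unfolding contract_simps .
  have e0: "merge w a ` {w,b} \<in> contract_edges E w a" using r1 unfolding separates_def by simp
  have r2: "separates (contract_edges E' u v) (f ` merge w a ` {w,b}) (f (lab Ci x)) (f (lab Ci a')) (f (lab Ci b1)) (f (lab Ci b2))"
    using separates_image_iff[OF f_inj subj efj inV[OF inX(1)] inV[OF aX] inV[OF inX(4)] inV[OF inX(5)] e0] r1
      lab_fixed inX aX f_edges by simp
  have f_lab_C': "f (lab Ci z) = merge u v (lab C' z)" if "z \<in> X" for z using f_lab that lab_fixed by simp
  have r2': "separates (contract_edges E' u v) (f ` merge w a ` {w,b}) (merge u v (lab C' x)) (merge u v (lab C' a')) (merge u v (lab C' b1)) (merge u v (lab C' b2))"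
    using r2 f_lab_C' inX aX by simp
  show ?thesis
    using separates_contract_edgesD[OF simple_C' uv_edge uv_neq xforest_no_common_nbr[OF xforest_C' uv_edge uv_neq] r2']
    by blast
qed

lemma separates_uv:
  assumes pq: "(p = u \<and> q = v) \<or> (p = v \<and> q = u)"
    and e: "{p, f lx} \<in> E'" "{p, f \<alpha>i} \<in> E'" "{q, f b} \<in> E'" "{q, f \<alpha>o} \<in> E'"
    and sel: "(\<alpha>i = \<alpha>1 \<and> \<alpha>o = \<alpha>2 \<and> ai = a1 \<and> ao = a2) \<or> (\<alpha>i = \<alpha>2 \<and> \<alpha>o = \<alpha>1 \<and> ai = a2 \<and> ao = a1)"
    and y: "y = b1 \<or> y = b2"
  shows "separates E' {u,v} (lab C' x) (lab C' ai) (lab C' ao) (lab C' y)"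
proof -
  have qp: "(q = u \<and> p = v) \<or> (q = v \<and> p = u)" using pq by auto
  have Yi: "\<alpha>i \<in> {lx,b,\<alpha>1,\<alpha>2}" "\<alpha>o \<in> {lx,b,\<alpha>1,\<alpha>2}" "lx \<in> {lx,b,\<alpha>1,\<alpha>2}" "b \<in> {lx,b,\<alpha>1,\<alpha>2}"
    using sel by auto
  have dd: "lx \<noteq> \<alpha>i" "b \<noteq> \<alpha>o" using sel nbrs_w_distinct by auto
  note pe = edges_at_centre[OF pq e(1) e(2) Yi(3) Yi(1) dd(1)]
  note qe = edges_at_centre[OF qp e(3) e(4) Yi(4) Yi(2) dd(2)]
  have vunl: "\<not> labeled X C' v" using pe(1) qe(1) pq by auto
  have aiX: "ai \<in> X" "ao \<in> X" "y \<in> X" using sel y inX by auto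
  note lC = lab_C'_eq[OF _ vunl]
  define G where "G = E' - {{u,v}}"
  have nuv: "f z \<noteq> u \<and> f z \<noteq> v" if "z \<in> {lx,b,\<alpha>1,\<alpha>2}" for z
    using f_nbr_neq[OF that] .
  have inG: "{p, f z} \<in> G" if "{p, f z} \<in> E'" "z \<in> {lx,b,\<alpha>1,\<alpha>2}" for z p
    using that nuv[OF that(2)] unfolding G_def by (auto simp: doubleton_eq_iff)
  have g: "{p, f lx} \<in> G" "{p, f \<alpha>i} \<in> G" "{q, f b} \<in> G" "{q, f \<alpha>o} \<in> G"
    using inG e Yi by auto
  have LAi: "conn H \<alpha>i (lab Ci ai)" and LAo: "conn H \<alpha>o (lab Ci ao)" using sel leaf_a
    by auto
  obtain \<beta> where bt: "{b,\<beta>} \<in> E" "\<beta> \<noteq> w" "\<beta> \<noteq> a" "conn H \<beta> (lab Ci y)"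
    using y edges_Ci(6,7) leaf_b \<beta>_neqs neqs by blast
  have conn_b_\<beta>: "conn G (f b) (f \<beta>)"
  proof -
    have "{b,\<beta>} \<in> {e\<in>E. w \<notin> e \<and> a \<notin> e}" using bt neqs by auto
    then show ?thesis using conn_far_f[OF conn_edge] G_def by simp
  qed
  have c1: "conn G (f lx) (f (lab Ci ai))"
    using conn_trans[OF conn_trans[OF conn_sym[OF conn_edge[OF g(1)]] conn_edge[OF g(2)]] conn_H_f[OF LAi, folded G_def]] .
  have qo: "conn G q (f (lab Ci ao))"
    using conn_trans[OF conn_edge[OF g(4)] conn_H_f[OF LAo, folded G_def]] .
  have qy: "conn G q (f (lab Ci y))"
    using conn_trans[OF conn_trans[OF conn_edge[OF g(3)] conn_b_\<beta>] conn_H_f[OF bt(4), folded G_def]] .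
  have c2: "conn G (f (lab Ci ao)) (f (lab Ci y))" using conn_trans[OF conn_sym[OF qo] qy] .
  have c3: "\<not> conn G (f lx) (f (lab Ci ao))"
  proof
    assume h: "conn G (f lx) (f (lab Ci ao))"
    have "conn G p q" using conn_trans[OF conn_trans[OF conn_edge[OF g(1)] h] conn_sym[OF qo]] .
    moreover have "{p,q} \<in> E'" "E' - {{p,q}} = G" using uv_edge pq unfolding G_def
      by (auto simp: insert_commute)
    ultimately show False using xforest_acyclic[OF xforest_C'] by metis
  qed
  show ?thesis unfolding separates_def using uv_edge c1 c2 c3 lC aiX inX(1) G_def by simp
qed

end

text \<open>The quartets of the caterpillar with cherries {x,a} and {b,b'} and a' in the middle,
where x a|a' b and x a|a' b' are displayed by one and the same edge.\<close>
definition caterpillar_quartets :: "xforest \<Rightarrow> nat \<Rightarrow> nat \<Rightarrow> nat \<Rightarrow> nat \<Rightarrow> nat \<Rightarrow> bool" where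
  "caterpillar_quartets C x a a' b b' \<longleftrightarrow>
     (\<exists>e \<in> edges C.
        (\<forall>y \<in> {b, b'}. separates (edges C) e (lab C x) (lab C a) (lab C a') (lab C y)) \<and>
        (\<forall>z \<in> {a, a'}. \<exists>e'. e' \<noteq> e \<and> separates (edges C) e' (lab C x) (lab C z) (lab C b) (lab C b')))"

lemma (in critical_configuration) caterpillar_quartets_C':
  obtains ai ao where "{ai, ao} = {a1, a2}" "caterpillar_quartets C' x ai ao b1 b2"
proof -
  obtain u v where uv: "{u,v} \<in> E'" "u \<noteq> v" "iso X (contract Ci w a) (contract C' u v)"
    using binary_xtree_covers_contract[OF binary_C' cardX finX covers_contract] by blast
  obtain f where f: "bij_betw f (verts Ci - {a}) (verts C' - {v})"
    "contract_edges (edges C') u v = (\<lambda>e. f ` e) ` contract_edges (edges Ci) w a"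
    "\<forall>z\<in>X. merge u v (lab C' z) = f (merge w a (lab Ci z))"
    using uv(3) unfolding iso_def contract_simps by auto
  interpret critical_cover X Ci C' x w a b \<alpha>1 \<alpha>2 \<beta>1 \<beta>2 a1 a2 b1 b2 u v f
    by (unfold_locales) (use uv f in auto)
  obtain p q where pq: "(p = u \<and> q = v) \<or> (p = v \<and> q = u)" "{p, f lx} \<in> E'"
   "({p,f b} \<in> E' \<and> {q, f \<alpha>1} \<in> E' \<and> {q, f \<alpha>2} \<in> E') \<or>
    ({p,f \<alpha>1} \<in> E' \<and> {q, f b} \<in> E' \<and> {q, f \<alpha>2} \<in> E') \<or>
    ({p,f \<alpha>2} \<in> E' \<and> {q, f b} \<in> E' \<and> {q, f \<alpha>1} \<in> E')"
    using f_nbrs_split by blast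
  have other: "\<exists>e'. e' \<noteq> {u,v} \<and> separates E' e' (lab C' x) (lab C' z) (lab C' b1) (lab C' b2)"
    if "z \<in> {a1, a2}" for z
    using separates_xa'_b1b2 that by blast
  from pq(3) show ?thesis
  proof (elim disjE conjE)
    assume "{p,f b} \<in> E'" "{q, f \<alpha>1} \<in> E'" "{q, f \<alpha>2} \<in> E'"
    then show ?thesis using restoring_split_impossible[OF pq(1,2)] by blast
  next
    assume h: "{p,f \<alpha>1} \<in> E'" "{q, f b} \<in> E'" "{q, f \<alpha>2} \<in> E'"
    have "caterpillar_quartets C' x a1 a2 b1 b2"
      unfolding caterpillar_quartets_def using separates_uv[OF pq(1,2) h] other uv(1) by blast
    then show ?thesis using that by blast
  next
    assume h: "{p,f \<alpha>2} \<in> E'" "{q, f b} \<in> E'" "{q, f \<alpha>1} \<in> E'"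
    have "caterpillar_quartets C' x a2 a1 b1 b2"
      unfolding caterpillar_quartets_def using separates_uv[OF pq(1,2) h] other uv(1) by blast
    then show ?thesis using that by (metis insert_commute)
  qed
qed

section \<open>The critical triplet\<close>

lemma critical_triplet_configurations:
  assumes finX: "finite X" and cardX: "3 \<le> card X" and ct: "critical_triplet X Ci Cj Ck"
  obtains x w a b \<alpha>1 \<alpha>2 \<beta>1 \<beta>2 a1 a2 b1 b2
  where "critical_configuration X Ci Cj x w a b \<alpha>1 \<alpha>2 \<beta>1 \<beta>2 a1 a2 b1 b2"
    and "critical_configuration X Ci Ck x w b a \<beta>1 \<beta>2 \<alpha>1 \<alpha>2 b1 b2 a1 a2"
proof -
  have Bi: "binary_xtree X Ci" and Bj: "binary_xtree X Cj" and Bk: "binary_xtree X Ck"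
    using ct unfolding critical_triplet_def by auto
  obtain x w a b where xX: "x \<in> X" and
    c: "{lab Ci x, w} \<in> edges Ci" "w \<noteq> lab Ci x"
      "{w, a} \<in> edges Ci" "{w, b} \<in> edges Ci"
      "a \<noteq> b" "a \<noteq> w" "b \<noteq> w" "a \<noteq> lab Ci x" "b \<noteq> lab Ci x"
      "\<not> labeled X Ci w" "\<not> labeled X Ci a" "\<not> labeled X Ci b"
      "\<not> iso X Cj Ci" "covers X Cj (contract Ci w a)"
      "\<not> iso X Ck Ci" "covers X Ck (contract Ci w b)"
    using ct unfolding critical_triplet_def by blast
  have Fi: "is_xforest X Ci" using binary_xtree_xforest[OF Bi] .
  have aw: "{a,w} \<in> edges Ci" and bw: "{b,w} \<in> edges Ci" using c(3,4)
    by (auto simp: insert_commute)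
  obtain \<alpha>1 \<alpha>2 where al: "{a,\<alpha>1} \<in> edges Ci" "{a,\<alpha>2} \<in> edges Ci" "\<alpha>1 \<noteq> \<alpha>2" "\<alpha>1 \<noteq> w" "\<alpha>2 \<noteq> w"
    using binary_xtree_other_nbrs[OF Bi aw c(11)] by blast
  obtain \<beta>1 \<beta>2 where be: "{b,\<beta>1} \<in> edges Ci" "{b,\<beta>2} \<in> edges Ci" "\<beta>1 \<noteq> \<beta>2" "\<beta>1 \<noteq> w" "\<beta>2 \<noteq> w"
    using binary_xtree_other_nbrs[OF Bi bw c(12)] by blast
  note behind_a = xforest_leaf_behind_nbr[OF Fi c(3,4,5,6,7)]
    and behind_b = xforest_leaf_behind_nbr[OF Fi c(4,3) c(5)[symmetric] c(7,6)]
  have swap: "{e\<in>edges Ci. w \<notin> e \<and> b \<notin> e \<and> a \<notin> e} = {e\<in>edges Ci. w \<notin> e \<and> a \<notin> e \<and> b \<notin> e}"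
    by blast
  obtain a1 a2 b1 b2 where leaves: "a1 \<in> X" "a2 \<in> X" "b1 \<in> X" "b2 \<in> X"
    "conn {e\<in>edges Ci. w \<notin> e \<and> a \<notin> e \<and> b \<notin> e} \<alpha>1 (lab Ci a1)"
    "conn {e\<in>edges Ci. w \<notin> e \<and> a \<notin> e \<and> b \<notin> e} \<alpha>2 (lab Ci a2)"
    "conn {e\<in>edges Ci. w \<notin> e \<and> a \<notin> e \<and> b \<notin> e} \<beta>1 (lab Ci b1)"
    "conn {e\<in>edges Ci. w \<notin> e \<and> a \<notin> e \<and> b \<notin> e} \<beta>2 (lab Ci b2)"
    using behind_a[OF al(1,4)] behind_a[OF al(2,5)]
      behind_b[OF be(1,4), unfolded swap] behind_b[OF be(2,5), unfolded swap] by blast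
  note leaves' = leaves(5-8)[folded swap]
  show ?thesis
  proof (rule that)
    show "critical_configuration X Ci Cj x w a b \<alpha>1 \<alpha>2 \<beta>1 \<beta>2 a1 a2 b1 b2"
      by unfold_locales (use Bi Bj finX cardX xX leaves c al be in auto)
    show "critical_configuration X Ci Ck x w b a \<beta>1 \<beta>2 \<alpha>1 \<alpha>2 b1 b2 a1 a2"
      by unfold_locales (use Bi Bk finX cardX xX leaves' leaves(1-4) c al be in auto)
  qed
qed

lemma critical_triplet_caterpillars:
  assumes "finite X" "3 \<le> card X" "critical_triplet X Ci Cj Ck"
  obtains x a1 a2 b1 b2 ai ao bi bo where "x \<in> X" "a1 \<in> X" "a2 \<in> X" "b1 \<in> X" "b2 \<in> X"
    "{ai, ao} = {a1, a2}" "caterpillar_quartets Cj x ai ao b1 b2"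
    "{bi, bo} = {b1, b2}" "caterpillar_quartets Ck x bi bo a1 a2"
proof -
  obtain x w a b \<alpha>1 \<alpha>2 \<beta>1 \<beta>2 a1 a2 b1 b2
    where cj: "critical_configuration X Ci Cj x w a b \<alpha>1 \<alpha>2 \<beta>1 \<beta>2 a1 a2 b1 b2"
      and ck: "critical_configuration X Ci Ck x w b a \<beta>1 \<beta>2 \<alpha>1 \<alpha>2 b1 b2 a1 a2"
    using critical_triplet_configurations[OF assms] .
  note inX = critical_configuration.inX[OF cj]
  obtain ai ao where "{ai, ao} = {a1, a2}" "caterpillar_quartets Cj x ai ao b1 b2"
    using critical_configuration.caterpillar_quartets_C'[OF cj] .
  moreover obtain bi bo where "{bi, bo} = {b1, b2}" "caterpillar_quartets Ck x bi bo a1 a2"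
    using critical_configuration.caterpillar_quartets_C'[OF ck] .
  ultimately show ?thesis by (rule that[OF inX])
qed

definition quartet_subset :: "nat set \<Rightarrow> xforest \<Rightarrow> xforest \<Rightarrow> bool" where
  "quartet_subset X F G \<longleftrightarrow>
     (\<forall>p\<in>X. \<forall>q\<in>X. \<forall>r\<in>X. \<forall>s\<in>X. has_quartet F p q r s \<longrightarrow> has_quartet G p q r s)"

text \<open>If the edge e of C_j carrying the cherry {x, ai} survives the contraction, C_k displays
x ai|ao bi next to its own x bi|a1 a2; otherwise another edge of C_j gives x ao|b1 b2, which
clashes with x bi|bo ao.\<close>
lemma caterpillar_quartets_not_subset:
  assumes Fj: "is_xforest X Cj" and Fk: "is_xforest X Ck"
    and X: "x \<in> X" "a1 \<in> X" "a2 \<in> X" "b1 \<in> X" "b2 \<in> X"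
    and a: "{ai, ao} = {a1, a2}" "caterpillar_quartets Cj x ai ao b1 b2"
    and b: "{bi, bo} = {b1, b2}" "caterpillar_quartets Ck x bi bo a1 a2"
    and uv: "{u,v} \<in> edges Cj" "u \<noteq> v"
  shows "\<not> quartet_subset X (contract Cj u v) Ck"
proof
  assume sub: "quartet_subset X (contract Cj u v) Ck"
  have efk: "simple_edges (edges Ck)" using xforest_simple_edges[OF Fk] .
  have iX: "ai \<in> X" "ao \<in> X" "bi \<in> X" "bo \<in> X" using a(1) b(1) X
    by (auto simp: doubleton_eq_iff)
  obtain e1 where e1: "e1 \<in> edges Cj"
      "\<And>y. y \<in> {b1, b2} \<Longrightarrow> separates (edges Cj) e1 (lab Cj x) (lab Cj ai) (lab Cj ao) (lab Cj y)"
      "\<And>z. z \<in> {ai, ao} \<Longrightarrow> \<exists>e'. e' \<noteq> e1 \<and> separates (edges Cj) e' (lab Cj x) (lab Cj z) (lab Cj b1) (lab Cj b2)"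
    using a(2) unfolding caterpillar_quartets_def by blast
  obtain e1' where e1':
      "\<And>y. y \<in> {a1, a2} \<Longrightarrow> separates (edges Ck) e1' (lab Ck x) (lab Ck bi) (lab Ck bo) (lab Ck y)"
      "\<And>z. z \<in> {bi, bo} \<Longrightarrow> \<exists>e'. e' \<noteq> e1' \<and> separates (edges Ck) e' (lab Ck x) (lab Ck z) (lab Ck a1) (lab Ck a2)"
    using b(2) unfolding caterpillar_quartets_def by blast
  have transfer: "has_quartet Ck p q r s"
    if "p \<in> X" "q \<in> X" "r \<in> X" "s \<in> X" "separates (edges Cj) e (lab Cj p) (lab Cj q) (lab Cj r) (lab Cj s)"
      "e \<noteq> {u,v}" for p q r s e
    using sub has_quartet_contract[OF Fj uv that(5,6)] that(1-4) unfolding quartet_subset_def by blast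
  show False
  proof (cases "e1 = {u,v}")
    case False
    have "bi \<in> {b1, b2}" using b(1) by auto
    then have "has_quartet Ck x ai ao bi" using transfer[OF X(1) iX(1,2,3) e1(2) False] by blast
    then obtain e where e: "separates (edges Ck) e (lab Ck x) (lab Ck ai) (lab Ck ao) (lab Ck bi)"
      unfolding has_quartet_def by blast
    obtain e2 where "separates (edges Ck) e2 (lab Ck x) (lab Ck bi) (lab Ck a1) (lab Ck a2)"
      using e1'(2) by blast
    then have "separates (edges Ck) e2 (lab Ck x) (lab Ck bi) (lab Ck ai) (lab Ck ao)"
      using a(1) separates_swap_right by (auto simp: doubleton_eq_iff)
    then show False using separates_incompatible[OF efk separates_swap_right[OF e]] by blast
  next
    case True
    obtain e2 where e2: "e2 \<noteq> e1" "separates (edges Cj) e2 (lab Cj x) (lab Cj ao) (lab Cj b1) (lab Cj b2)"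
      using e1(3) by blast
    have "has_quartet Ck x ao b1 b2" using transfer[OF X(1) iX(2) X(4,5) e2(2)] True e2(1) by blast
    then obtain e where "separates (edges Ck) e (lab Ck x) (lab Ck ao) (lab Ck b1) (lab Ck b2)"
      unfolding has_quartet_def by blast
    then have e: "separates (edges Ck) e (lab Ck x) (lab Ck ao) (lab Ck bi) (lab Ck bo)"
      using b(1) separates_swap_right by (auto simp: doubleton_eq_iff)
    have "ao \<in> {a1, a2}" using a(1) by auto
    then have "separates (edges Ck) e1' (lab Ck x) (lab Ck bi) (lab Ck bo) (lab Ck ao)" using e1'(1)
      by blast
    then show False using separates_incompatible[OF efk e separates_swap_right] by blast
  qed
qed

lemma nni_adjacent_quartet_subset:
  assumes "nni_adjacent X C C'"
  obtains u v where "{u,v} \<in> edges C" "u \<noteq> v" "quartet_subset X (contract C u v) C'"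
proof -
  obtain u v b c where nn: "{u, v} \<in> edges C" "u \<noteq> v" "{u, b} \<in> edges C" "b \<noteq> u" "b \<noteq> v"
      "{v, c} \<in> edges C" "c \<noteq> v" "c \<noteq> u" "iso X C' (nni_move C u v b c)"
    using assms unfolding nni_adjacent_def by blast
  have F: "is_xforest X C" and F': "is_xforest X C'"
    using assms binary_xtree_xforest unfolding nni_adjacent_def by blast+
  note np = nni_move_props[OF F nn(1,2,3,6,4,5,8,7)]
  have "has_quartet C' p q r s"
    if "p \<in> X" "q \<in> X" "r \<in> X" "s \<in> X" "has_quartet (contract C u v) p q r s" for p q r s
  proof -
    have "has_quartet (nni_move C u v b c) p q r s"
      using has_quartet_contractD[OF np(1,2) nn(2) np(3)] that(5)
        contract_nni_move[OF nn(3,6,4,5,8,7,2)] by simp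
    then show ?thesis using iso_has_quartet_iff[OF F' nn(9) that(1-4)] by simp
  qed
  then show ?thesis using that nn(1,2) unfolding quartet_subset_def by blast
qed

lemma common_cover_quartet_subset:
  assumes "finite X" "3 \<le> card X" "binary_xtree X C" "binary_xtree X C'"
    and "covers X C F" "covers X C' F"
  obtains u v where "{u,v} \<in> edges C" "u \<noteq> v" "quartet_subset X (contract C u v) C'"
proof -
  have F: "is_xforest X F" and F': "is_xforest X C'" using assms(6) unfolding covers_def by auto
  obtain u v where uv: "{u,v} \<in> edges C" "u \<noteq> v" "iso X F (contract C u v)"
    using binary_xtree_covers_contract[OF assms(3,2,1,5)] by blast
  obtain u' v' where uv': "{u',v'} \<in> edges C'" "u' \<noteq> v'" "iso X F (contract C' u' v')"
    using binary_xtree_covers_contract[OF assms(4,2,1,6)] by blast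
  have "has_quartet C' p q r s"
    if "p \<in> X" "q \<in> X" "r \<in> X" "s \<in> X" "has_quartet (contract C u v) p q r s" for p q r s
  proof -
    have "has_quartet (contract C' u' v') p q r s"
      using iso_has_quartet_iff[OF F uv(3) that(1-4)] iso_has_quartet_iff[OF F uv'(3) that(1-4)] that(5)
      by simp
    then show ?thesis
      using has_quartet_contractD[OF xforest_simple_edges[OF F'] uv'(1,2) xforest_no_common_nbr[OF F' uv'(1,2)]]
      by simp
  qed
  then show ?thesis using that uv(1,2) unfolding quartet_subset_def by blast
qed

theorem mainTheorem6:
  fixes n :: nat and Ci Cj Ck :: xforest
  assumes "n \<ge> 5"
    and "critical_triplet {1..n} Ci Cj Ck"
  shows "\<not> nni_adjacent {1..n} Cj Ck \<and>
         \<not> (\<exists>F. is_xforest {1..n} F \<and> covers {1..n} Cj F \<and> covers {1..n} Ck F)"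
proof -
  define X where "X = {1..n}"
  have finX: "finite X" and cardX: "3 \<le> card X" using assms(1) unfolding X_def by auto
  have ct: "critical_triplet X Ci Cj Ck" using assms(2) unfolding X_def .
  have Bj: "binary_xtree X Cj" and Bk: "binary_xtree X Ck"
    using ct unfolding critical_triplet_def by auto
  obtain x a1 a2 b1 b2 ai ao bi bo where
    "x \<in> X" "a1 \<in> X" "a2 \<in> X" "b1 \<in> X" "b2 \<in> X"
    "{ai, ao} = {a1, a2}" "caterpillar_quartets Cj x ai ao b1 b2"
    "{bi, bo} = {b1, b2}" "caterpillar_quartets Ck x bi bo a1 a2"
    using critical_triplet_caterpillars[OF finX cardX ct] .
  note not_subset = caterpillar_quartets_not_subset[OF binary_xtree_xforest[OF Bj]
      binary_xtree_xforest[OF Bk] this]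
  have "\<not> nni_adjacent X Cj Ck"
    using nni_adjacent_quartet_subset not_subset by metis
  moreover have "\<not> (covers X Cj F \<and> covers X Ck F)" for F
    using common_cover_quartet_subset[OF finX cardX Bj Bk] not_subset by metis
  ultimately show ?thesis unfolding X_def by blast
qed

end
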